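(* Let $\mathbb{K}$ be an algebraically closed field of characteristic $p$, with $p=0$ or $p\ge5$, and let $(\Lambda_1,\Lambda_2,\Lambda_3)$ be a dual $3$-net of conic-line type of order $n$ in $PG(2,\mathbb{K})$, with $n<p$ if $p>0$. Then $(\Lambda_1,\Lambda_2,\Lambda_3)$ realizes a cyclic group $C_n$.
   Context: A dual $3$-net of order $n$ in $PG(2,\mathbb{K})$ is a triple $(\Lambda_1,\Lambda_2,\Lambda_3)$ of pairwise disjoint point sets, each of size $n$, such that every line meeting two distinct components meets each component in exactly one point. It realizes a group $(G,\cdot)$ if there are bijections $\alpha:G\to\Lambda_1$, $\beta:G\to\Lambda_2$, $\gamma:G\to\Lambda_3$ with $a\cdot b=c$ iff $\alpha(a),\beta(b),\gamma(c)$ are collinear. A dual $3$-net of order $n\ge4$ is of conic-line type if two of its components lie on an irreducible conic and the third lies on a line. *)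

theory Defs
  imports "HOL-Computational_Algebra.Polynomial"
begin

type_synonym 'k vec3 = "'k \<times> 'k \<times> 'k"

definition smul3 :: "'k::field \<Rightarrow> 'k vec3 \<Rightarrow> 'k vec3" where
  "smul3 c v = (case v of (x, y, z) \<Rightarrow> (c * x, c * y, c * z))"

definition dot3 :: "'k::field vec3 \<Rightarrow> 'k vec3 \<Rightarrow> 'k" where
  "dot3 a v = (case a of (a1, a2, a3) \<Rightarrow> case v of (x, y, z) \<Rightarrow> a1 * x + a2 * y + a3 * z)"

definition proj_point :: "'k::field vec3 \<Rightarrow> 'k vec3 set" where
  "proj_point v = {smul3 c v | c. c \<noteq> 0}"

definition PG2 :: "'k::field vec3 set set" where
  "PG2 = {proj_point v | v. v \<noteq> (0, 0, 0)}"

definition pline :: "'k::field vec3 \<Rightarrow> 'k vec3 set set" where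
  "pline a = {proj_point v | v. v \<noteq> (0, 0, 0) \<and> dot3 a v = 0}"

definition plines :: "'k::field vec3 set set set" where
  "plines = {pline a | a. a \<noteq> (0, 0, 0)}"

definition pcollinear :: "'k::field vec3 set \<Rightarrow> 'k vec3 set \<Rightarrow> 'k vec3 set \<Rightarrow> bool" where
  "pcollinear P Q R \<longleftrightarrow> (\<exists>l\<in>plines. P \<in> l \<and> Q \<in> l \<and> R \<in> l)"

type_synonym 'k qform = "'k \<times> 'k \<times> 'k \<times> 'k \<times> 'k \<times> 'k"

definition qeval :: "'k::field qform \<Rightarrow> 'k vec3 \<Rightarrow> 'k" where
  "qeval q v = (case q of (a, b, c, d, e, f) \<Rightarrow> case v of (x, y, z) \<Rightarrow>
      a * x^2 + b * y^2 + c * z^2 + d * x * y + e * x * z + f * y * z)"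

definition lin_prod :: "'k::field vec3 \<Rightarrow> 'k vec3 \<Rightarrow> 'k qform" where
  "lin_prod l m = (case l of (l1, l2, l3) \<Rightarrow> case m of (m1, m2, m3) \<Rightarrow>
      (l1 * m1, l2 * m2, l3 * m3, l1 * m2 + l2 * m1, l1 * m3 + l3 * m1, l2 * m3 + l3 * m2))"

definition irreducible_qform :: "'k::field qform \<Rightarrow> bool" where
  "irreducible_qform q \<longleftrightarrow> q \<noteq> (0, 0, 0, 0, 0, 0) \<and> (\<nexists>l m. q = lin_prod l m)"

definition conic_pts :: "'k::field qform \<Rightarrow> 'k vec3 set set" where
  "conic_pts q = {proj_point v | v. v \<noteq> (0, 0, 0) \<and> qeval q v = 0}"

definition irreducible_conic :: "'k::field vec3 set set \<Rightarrow> bool" where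
  "irreducible_conic C \<longleftrightarrow> (\<exists>q. irreducible_qform q \<and> C = conic_pts q)"

definition comp3 :: "'a \<Rightarrow> 'a \<Rightarrow> 'a \<Rightarrow> nat \<Rightarrow> 'a" where
  "comp3 A B C i = (if i = 0 then A else if i = 1 then B else C)"

definition dual_3net ::
  "'k::field vec3 set set \<Rightarrow> 'k vec3 set set \<Rightarrow> 'k vec3 set set \<Rightarrow> nat \<Rightarrow> bool" where
  "dual_3net L1 L2 L3 n \<longleftrightarrow>
     (\<forall>i<3. comp3 L1 L2 L3 i \<subseteq> PG2 \<and> finite (comp3 L1 L2 L3 i) \<and> card (comp3 L1 L2 L3 i) = n) \<and>
     (\<forall>i<3. \<forall>j<3. i \<noteq> j \<longrightarrow> comp3 L1 L2 L3 i \<inter> comp3 L1 L2 L3 j = {}) \<and>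
     (\<forall>l\<in>plines. \<forall>i<3. \<forall>j<3. i \<noteq> j \<and> l \<inter> comp3 L1 L2 L3 i \<noteq> {} \<and> l \<inter> comp3 L1 L2 L3 j \<noteq> {}
        \<longrightarrow> (\<forall>k<3. card (l \<inter> comp3 L1 L2 L3 k) = 1))"

definition conic_line_type ::
  "'k::field vec3 set set \<Rightarrow> 'k vec3 set set \<Rightarrow> 'k vec3 set set \<Rightarrow> nat \<Rightarrow> bool" where
  "conic_line_type L1 L2 L3 n \<longleftrightarrow> dual_3net L1 L2 L3 n \<and> n \<ge> 4 \<and>
     (\<exists>k<3. \<exists>C l. irreducible_conic C \<and> l \<in> plines \<and> comp3 L1 L2 L3 k \<subseteq> l \<and>
        (\<forall>i<3. i \<noteq> k \<longrightarrow> comp3 L1 L2 L3 i \<subseteq> C))"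

definition realizes ::
  "'k::field vec3 set set \<Rightarrow> 'k vec3 set set \<Rightarrow> 'k vec3 set set \<Rightarrow> 'g set \<Rightarrow> ('g \<Rightarrow> 'g \<Rightarrow> 'g) \<Rightarrow> bool" where
  "realizes L1 L2 L3 G gop \<longleftrightarrow> (\<exists>\<alpha> \<beta> \<gamma>. bij_betw \<alpha> G L1 \<and> bij_betw \<beta> G L2 \<and> bij_betw \<gamma> G L3 \<and>
     (\<forall>a\<in>G. \<forall>b\<in>G. \<forall>c\<in>G. gop a b = c \<longleftrightarrow> pcollinear (\<alpha> a) (\<beta> b) (\<gamma> c)))"

definition cyclic_carrier :: "nat \<Rightarrow> nat set" where "cyclic_carrier n = {0..<n}"
definition cyclic_mult :: "nat \<Rightarrow> nat \<Rightarrow> nat \<Rightarrow> nat" where "cyclic_mult n a b = (a + b) mod n"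

end

theory Submission imports Defs "HOL-Algebra.Multiplicative_Group" begin
lemma (in group) card_ord_eq_le_phi':
  assumes finite: "finite (carrier G)"
    and roots: "\<And>d. 0 < d \<Longrightarrow> card {x \<in> carrier G. x [^] d = \<one>} \<le> d"
  shows "card {x \<in> carrier G. ord x = d} \<le> phi' d"
proof (cases "\<exists>a\<in>carrier G. ord a = d")
  case False
  then have "{x \<in> carrier G. ord x = d} = {}" by auto
  then show ?thesis by (metis card.empty le0)
next
  case True
  then obtain a where a: "a \<in> carrier G" "ord a = d" by blast
  have d: "0 < d" using ord_ge_1[OF finite a(1)] a(2) by simp
  have roots_are_powers: "{x \<in> carrier G. x [^] d = \<one>} = (\<lambda>k. a [^] k) ` {1..d}"
  proof (rule card_seteq[symmetric])
    show "finite {x \<in> carrier G. x [^] d = \<one>}" using finite by simp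
    show "(\<lambda>k. a [^] k) ` {1..d} \<subseteq> {x \<in> carrier G. x [^] d = \<one>}"
    proof (intro image_subsetI CollectI conjI)
      fix k assume "k \<in> {1..d}"
      show "a [^] k \<in> carrier G" using a(1) by simp
      have "(a [^] k) [^] d = (a [^] d) [^] k"
        using a(1) by (simp add: nat_pow_pow mult.commute)
      then show "(a [^] k) [^] d = \<one>" using a(1) by (simp add: a(2)[symmetric])
    qed
    show "card {x \<in> carrier G. x [^] d = \<one>} \<le> card ((\<lambda>k. a [^] k) ` {1..d})"
      using roots[OF d] card_image[OF ord_inj'[OF a(1)]] a(2) by simp
  qed
  let ?units = "{k. 1 \<le> k \<and> k \<le> d \<and> coprime k d}"
  have "{x \<in> carrier G. ord x = d} \<subseteq> (\<lambda>k. a [^] k) ` ?units"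
  proof
    fix x assume x: "x \<in> {x \<in> carrier G. ord x = d}"
    then have "x \<in> (\<lambda>k. a [^] k) ` {1..d}" using roots_are_powers by auto
    then obtain k where k: "k \<in> {1..d}" "x = a [^] k" by auto
    then have "ord (a [^] k) = ord a" using x a(2) by simp
    then have "coprime k d" using pow_ord_eq_ord_iff[OF finite a(1)] a(2) by simp
    then show "x \<in> (\<lambda>k. a [^] k) ` ?units" using k by auto
  qed
  then have "card {x \<in> carrier G. ord x = d} \<le> card ((\<lambda>k. a [^] k) ` ?units)"
    by (intro card_mono) auto
  also have "\<dots> \<le> card ?units" by (intro card_image_le) auto
  finally show ?thesis unfolding phi'_def .
qed

theorem (in group) ord_eq_order_if_roots_bounded:
  assumes finite: "finite (carrier G)"
    and roots: "\<And>d. 0 < d \<Longrightarrow> card {x \<in> carrier G. x [^] d = \<one>} \<le> d"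
  shows "\<exists>g\<in>carrier G. ord g = order G"
proof -
  let ?N = "\<lambda>d. card {x \<in> carrier G. ord x = d}"
  let ?D = "{d. d dvd order G}"
  have pos: "0 < order G" using finite by (simp add: order_gt_0_iff_finite)
  have "sum ?N ?D = card (\<Union>d\<in>?D. {x \<in> carrier G. ord x = d})"
    by (rule card_UN_disjoint[symmetric]) (use finite pos in auto)
  also have "(\<Union>d\<in>?D. {x \<in> carrier G. ord x = d}) = carrier G"
    using ord_dvd_group_order by auto
  also have "card (carrier G) = sum phi' ?D" using sum_phi'_factors[OF pos] by (simp add: order_def)
  finally have "?N (order G) = phi' (order G)"
    by (rule sum_mono_inv) (use card_ord_eq_le_phi'[OF finite roots] pos in auto)
  then have "?N (order G) > 0" using phi'_nonzero[OF pos] by simp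
  then show ?thesis by (auto simp: card_gt_0_iff)
qed

lemma card_roots_of_unity_le:
  fixes S :: "'k::field set"
  assumes "0 < d"
  shows "card {x \<in> S. x ^ d = 1} \<le> d"
proof -
  define p :: "'k poly" where "p = Polynomial.monom 1 d + [:-1:]"
  have deg: "degree p = d"
    unfolding p_def using assms by (subst degree_add_eq_left) (simp_all add: degree_monom_eq)
  then have "p \<noteq> 0" using assms by auto
  have "{x \<in> S. x ^ d = 1} \<subseteq> {x. poly p x = 0}" by (auto simp: p_def poly_monom)
  then have "card {x \<in> S. x ^ d = 1} \<le> card {x. poly p x = 0}"
    using poly_roots_finite[OF \<open>p \<noteq> 0\<close>] by (rule card_mono[rotated])
  also have "\<dots> \<le> d" using card_poly_roots_bound[OF \<open>p \<noteq> 0\<close>] deg by simp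
  finally show ?thesis .
qed

lemma finite_mult_subgroup_cyclic:
  fixes S :: "'k::field set"
  assumes finite: "finite S" and one: "1 \<in> S" and nonzero: "0 \<notin> S"
    and closed: "\<And>x y. x \<in> S \<Longrightarrow> y \<in> S \<Longrightarrow> x * y \<in> S"
  obtains g where "bij_betw (\<lambda>i. g ^ i) {0..<card S} S" "g ^ card S = 1"
proof -
  define G where "G = \<lparr>carrier = S, monoid.mult = (*), one = (1::'k)\<rparr>"
  have inverse: "\<exists>y\<in>S. y * x = 1" if "x \<in> S" for x
  proof -
    have "inj_on (\<lambda>y. x * y) S" using that nonzero by (auto simp: inj_on_def)
    moreover have "(\<lambda>y. x * y) ` S \<subseteq> S" using closed that by auto
    ultimately have "(\<lambda>y. x * y) ` S = S" using finite by (simp add: endo_inj_surj)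
    then show ?thesis using one by (force simp: mult.commute)
  qed
  interpret group G
    by (rule groupI) (auto simp: G_def closed one inverse mult.assoc)
  have pow: "x [^]\<^bsub>G\<^esub> (k::nat) = x ^ k" for x k
    by (induction k) (simp_all add: G_def mult.commute)
  have "card {x \<in> carrier G. x [^]\<^bsub>G\<^esub> d = \<one>\<^bsub>G\<^esub>} \<le> d" if "0 < d" for d
    using card_roots_of_unity_le[OF that, of S] by (simp add: pow) (simp add: G_def)
  then obtain g where g: "g \<in> S" "ord g = card S"
    using ord_eq_order_if_roots_bounded finite by (auto simp: G_def order_def)
  have gG: "g \<in> carrier G" using g(1) by (simp add: G_def)
  have "0 < card S" using finite one by (auto simp: card_gt_0_iff)
  then have "{0..ord g - 1} = {0..<card S}" using g(2) by auto
  then have inj: "inj_on (\<lambda>i. g ^ i) {0..<card S}"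
    using ord_inj[OF gG] by (simp add: pow)
  have "(\<lambda>i. g ^ i) ` {0..<card S} \<subseteq> S"
    using nat_pow_closed[OF gG] by (auto simp: G_def simp flip: pow)
  then have "(\<lambda>i. g ^ i) ` {0..<card S} = S"
    using card_image[OF inj] finite by (intro card_subset_eq) auto
  moreover have "g ^ card S = 1"
    using pow_ord_eq_1[OF gG] g(2) by (simp add: pow) (simp add: G_def)
  ultimately show ?thesis using inj by (intro that) (simp_all add: bij_betw_def)
qed

lemma card_gt_if_translation_invariant:
  fixes Z :: "'k::idom set"
  assumes "finite Z" "z \<in> Z" "d \<noteq> 0" and shift: "\<And>t. t \<in> Z \<Longrightarrow> t + d \<in> Z"
    and char: "\<And>j. 0 < j \<Longrightarrow> j \<le> n \<Longrightarrow> of_nat j \<noteq> (0::'k)"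
  shows "n < card Z"
proof -
  have progression: "z + of_nat j * d \<in> Z" for j
  proof (induction j)
    case (Suc j)
    then have "z + of_nat j * d + d \<in> Z" by (rule shift)
    then show ?case by (simp add: algebra_simps)
  qed (simp add: \<open>z \<in> Z\<close>)
  have "inj_on (\<lambda>j. z + of_nat j * d) {0..n}"
  proof (rule inj_onI)
    fix i j assume ij: "i \<in> {0..n}" "j \<in> {0..n}" "z + of_nat i * d = z + of_nat j * d"
    then have "of_nat i = (of_nat j :: 'k)" using \<open>d \<noteq> 0\<close> by simp
    then have "of_nat (i - j) = (0::'k)" "of_nat (j - i) = (0::'k)"
      by (simp_all add: of_nat_diff_if)
    then show "i = j" using char[of "i - j"] char[of "j - i"] ij(1,2) by force
  qed
  then have "card ((\<lambda>j. z + of_nat j * d) ` {0..n}) = Suc n" by (simp add: card_image)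
  moreover have "(\<lambda>j. z + of_nat j * d) ` {0..n} \<subseteq> Z" using progression by auto
  ultimately have "Suc n \<le> card Z" using card_mono[OF \<open>finite Z\<close>] by metis
  then show ?thesis by simp
qed

lemma sum_set_not_in_smaller_set:
  fixes Y Z X :: "'k::idom set"
  assumes "finite X" "card Y = n" "card Z = n" "card X \<le> n" "2 \<le> n"
    and sum: "\<And>s t. s \<in> Y \<Longrightarrow> t \<in> Z \<Longrightarrow> s + t \<in> X"
    and char: "\<And>j. 0 < j \<Longrightarrow> j \<le> n \<Longrightarrow> of_nat j \<noteq> (0::'k)"
  shows False
proof -
  have "finite Y" "finite Z" using assms(2,3,5) card.infinite by fastforce+
  obtain y0 y1 where y: "y0 \<in> Y" "y1 \<in> Y" "y0 \<noteq> y1"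
    using \<open>finite Y\<close> assms(2,5) by (metis One_nat_def card_le_Suc0_iff_eq not_less_eq_eq numeral_2_eq_2)
  obtain z where "z \<in> Z" using assms(3,5) by fastforce
  have translate: "(\<lambda>t. s + t) ` Z = X" if "s \<in> Y" for s
  proof (rule card_seteq)
    show "card X \<le> card ((\<lambda>t. s + t) ` Z)" using assms(3,4) by (simp add: card_image)
  qed (use sum that assms(1) in auto)
  have shift: "t + (y1 - y0) \<in> Z" if "t \<in> Z" for t
  proof -
    have "y1 + t \<in> (\<lambda>t. y0 + t) ` Z" using translate[OF y(1)] sum[OF y(2) that] by simp
    then obtain t' where "t' \<in> Z" "y1 + t = y0 + t'" by auto
    moreover from this(2) have "t + (y1 - y0) = t'" by (simp add: algebra_simps)
    ultimately show ?thesis by simp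
  qed
  have "n < card Z"
    by (rule card_gt_if_translation_invariant[OF \<open>finite Z\<close> \<open>z \<in> Z\<close>, of "y1 - y0"])
      (use y(3) shift char in auto)
  then show False using assms(3) by simp
qed

lemma product_sets_are_cosets:
  fixes Y Z X :: "'k::field set"
  assumes "finite Z" "finite X" "card Y = n" "card Z = n" "card X = n" "0 < n"
    and "0 \<notin> Y" "0 \<notin> Z"
    and prod: "\<And>s t. s \<in> Y \<Longrightarrow> t \<in> Z \<Longrightarrow> s * t \<in> X"
  obtains S y0 z0 where "finite S" "1 \<in> S" "0 \<notin> S" "\<And>x y. x \<in> S \<Longrightarrow> y \<in> S \<Longrightarrow> x * y \<in> S"
    "card S = n" "y0 \<noteq> 0" "z0 \<noteq> 0" "Y = (\<lambda>s. y0 * s) ` S" "Z = (\<lambda>s. z0 * s) ` S"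
    "X = (\<lambda>s. y0 * z0 * s) ` S"
proof -
  obtain y0 z0 where yz: "y0 \<in> Y" "z0 \<in> Z" using assms(3,4,6) by fastforce
  have nz: "y0 \<noteq> 0" "z0 \<noteq> 0" using yz assms(7,8) by auto
  have translate: "(\<lambda>t. s * t) ` Z = X" if "s \<in> Y" for s
  proof (rule card_subset_eq)
    have "s \<noteq> 0" using that assms(7) by auto
    then show "card ((\<lambda>t. s * t) ` Z) = card X"
      using assms(4,5) by (simp add: card_image inj_on_def)
  qed (use prod that assms(2) in auto)
  define S where "S = {x. x \<noteq> 0 \<and> (\<lambda>t. x * t) ` Z = Z}"
  have closed: "x * y \<in> S" if "x \<in> S" "y \<in> S" for x y
  proof -
    have "(\<lambda>t. x * y * t) ` Z = (\<lambda>t. x * t) ` ((\<lambda>t. y * t) ` Z)"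
      by (auto simp: image_image mult.assoc)
    then show ?thesis using that by (simp add: S_def)
  qed
  have "S \<subseteq> (\<lambda>t. t / z0) ` Z"
  proof
    fix x assume "x \<in> S"
    then have "x * z0 \<in> Z" using yz(2) by (auto simp: S_def)
    then show "x \<in> (\<lambda>t. t / z0) ` Z" using nz(2) by (auto intro: image_eqI[of _ _ "x * z0"])
  qed
  then have "finite S" using assms(1) by (auto intro: finite_subset)
  have "card S \<le> card ((\<lambda>t. t / z0) ` Z)"
    using \<open>S \<subseteq> _\<close> assms(1) by (intro card_mono) auto
  also have "\<dots> \<le> n" using card_image_le[OF assms(1)] assms(4) by simp
  finally have "card S \<le> n" .
  have "(\<lambda>s. s / y0) ` Y \<subseteq> S"
  proof
    fix x assume "x \<in> (\<lambda>s. s / y0) ` Y"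
    then obtain s where s: "s \<in> Y" "x = s / y0" by auto
    have "(\<lambda>t. x * t) ` Z = (\<lambda>t. t / y0) ` ((\<lambda>t. s * t) ` Z)" using s by (auto simp: image_image)
    also have "\<dots> = (\<lambda>t. t / y0) ` ((\<lambda>t. y0 * t) ` Z)" using translate s(1) yz(1) by simp
    also have "\<dots> = Z" using nz(1) by (auto simp: image_image)
    finally show "x \<in> S" using s assms(7) nz(1) by (auto simp: S_def)
  qed
  moreover have "card ((\<lambda>s. s / y0) ` Y) = n"
    using nz(1) assms(3) by (simp add: card_image inj_on_def)
  ultimately have S_eq: "S = (\<lambda>s. s / y0) ` Y"
    using \<open>finite S\<close> \<open>card S \<le> n\<close> by (metis card_seteq)
  then have "card S = n" using \<open>card ((\<lambda>s. s / y0) ` Y) = n\<close> by simp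
  have Y: "Y = (\<lambda>s. y0 * s) ` S" using S_eq nz(1) by (auto simp: image_image)
  have Z: "Z = (\<lambda>s. z0 * s) ` S"
  proof (rule card_subset_eq[symmetric])
    show "(\<lambda>s. z0 * s) ` S \<subseteq> Z" using yz(2) by (auto simp: S_def mult.commute)
    show "card ((\<lambda>s. z0 * s) ` S) = card Z"
      using nz(2) \<open>card S = n\<close> assms(4) by (simp add: card_image inj_on_def)
  qed (rule assms(1))
  have X: "X = (\<lambda>s. y0 * z0 * s) ` S"
    using translate[OF yz(1)] Z by (auto simp: image_image mult.assoc)
  have "1 \<in> S" "0 \<notin> S" by (auto simp: S_def)
  from that[OF \<open>finite S\<close> this closed \<open>card S = n\<close> nz Y Z X] show ?thesis .
qed

definition add3 :: "'k::field vec3 \<Rightarrow> 'k vec3 \<Rightarrow> 'k vec3" where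
  "add3 u v = (case u of (a, b, c) \<Rightarrow> case v of (x, y, z) \<Rightarrow> (a + x, b + y, c + z))"

definition cross3 :: "'k::field vec3 \<Rightarrow> 'k vec3 \<Rightarrow> 'k vec3" where
  "cross3 u v = (case u of (a1, a2, a3) \<Rightarrow> case v of (b1, b2, b3) \<Rightarrow>
     (a2 * b3 - a3 * b2, a3 * b1 - a1 * b3, a1 * b2 - a2 * b1))"

definition det3 :: "'k::field vec3 \<Rightarrow> 'k vec3 \<Rightarrow> 'k vec3 \<Rightarrow> 'k" where
  "det3 u v w = dot3 u (cross3 v w)"

definition qgrad :: "'k::field qform \<Rightarrow> 'k vec3 \<Rightarrow> 'k vec3" where
  "qgrad q u = (case q of (a, b, c, d, e, f) \<Rightarrow> case u of (x, y, z) \<Rightarrow>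
     (2 * a * x + d * y + e * z, 2 * b * y + d * x + f * z, 2 * c * z + e * x + f * y))"

definition qpolar :: "'k::field qform \<Rightarrow> 'k vec3 \<Rightarrow> 'k vec3 \<Rightarrow> 'k" where
  "qpolar q u v = dot3 (qgrad q u) v"

lemmas vec3_defs =
  add3_def cross3_def det3_def qgrad_def qpolar_def dot3_def smul3_def qeval_def lin_prod_def

lemma dot3_add: "dot3 a (add3 u v) = dot3 a u + dot3 a v"
  by (cases a; cases u; cases v) (simp add: vec3_defs algebra_simps)

lemma dot3_add_left: "dot3 (add3 u v) a = dot3 u a + dot3 v a"
  by (cases a; cases u; cases v) (simp add: vec3_defs algebra_simps)

lemma dot3_smul: "dot3 a (smul3 c u) = c * dot3 a u"
  by (cases a; cases u) (simp add: vec3_defs algebra_simps)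

lemma dot3_smul_left: "dot3 (smul3 c a) u = c * dot3 a u"
  by (cases a; cases u) (simp add: vec3_defs algebra_simps)

lemma dot3_zero_left [simp]: "dot3 (0, 0, 0) u = 0"
  by (cases u) (simp add: dot3_def)

lemma dot3_commute: "dot3 a u = dot3 u a"
  by (cases a; cases u) (simp add: vec3_defs algebra_simps)

lemma eq_zero_if_dot3_eq_zero:
  assumes "\<And>x. dot3 w x = 0"
  shows "w = (0, 0, 0)"
proof -
  obtain w1 w2 w3 where w: "w = (w1, w2, w3)" by (cases w)
  show ?thesis
    using assms[of "(1, 0, 0)"] assms[of "(0, 1, 0)"] assms[of "(0, 0, 1)"] by (simp add: w dot3_def)
qed

lemma smul3_smul3: "smul3 a (smul3 b u) = smul3 (a * b) u"
  by (cases u) (simp add: vec3_defs)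

lemma smul3_one [simp]: "smul3 1 u = u"
  and smul3_zero [simp]: "smul3 0 u = (0, 0, 0)"
  by (cases u; simp add: vec3_defs)+

lemma smul3_eq_zero_iff: "smul3 c u = (0, 0, 0) \<longleftrightarrow> c = 0 \<or> u = (0, 0, 0)"
  by (cases u) (auto simp: vec3_defs)

lemma smul3_cancel: "c \<noteq> 0 \<Longrightarrow> smul3 c u = smul3 c v \<Longrightarrow> u = v"
  by (cases u; cases v) (simp add: smul3_def)

lemma qeval_smul: "qeval q (smul3 c u) = c\<^sup>2 * qeval q u"
  by (cases q; cases u) (simp add: vec3_defs power2_eq_square algebra_simps)

lemma qeval_zero [simp]: "qeval q (0, 0, 0) = 0"
  by (cases q) (simp add: qeval_def)

lemma qeval_add: "qeval q (add3 u v) = qeval q u + qeval q v + qpolar q u v"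
  by (cases q; cases u; cases v) (simp add: vec3_defs power2_eq_square algebra_simps)

lemma qpolar_commute: "qpolar q u v = qpolar q v u"
  by (cases q; cases u; cases v) (simp add: vec3_defs algebra_simps)

lemma qpolar_self: "qpolar q u u = 2 * qeval q u"
  by (cases q; cases u) (simp add: vec3_defs power2_eq_square algebra_simps)

lemma qpolar_add: "qpolar q u (add3 v w) = qpolar q u v + qpolar q u w"
  by (simp add: qpolar_def dot3_add)

lemma qpolar_smul: "qpolar q u (smul3 c v) = c * qpolar q u v"
  by (simp add: qpolar_def dot3_smul)

lemma qpolar_add_left: "qpolar q (add3 v w) u = qpolar q v u + qpolar q w u"
  by (simp add: qpolar_commute[of q _ u] qpolar_add)

lemma qpolar_smul_left: "qpolar q (smul3 c v) u = c * qpolar q v u"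
  by (simp add: qpolar_commute[of q _ u] qpolar_smul)

lemma qpolar_zero_right [simp]: "qpolar q u (0, 0, 0) = 0"
  by (cases u) (simp add: vec3_defs)

lemma qpolar_eq_zero_if_qgrad_eq_zero: "qgrad q u = (0, 0, 0) \<Longrightarrow> qpolar q u v = 0"
  by (cases v) (simp add: qpolar_def dot3_def)

lemma qeval_lin_comb2:
  "qeval q (add3 (smul3 a u) (smul3 b v)) = a\<^sup>2 * qeval q u + b\<^sup>2 * qeval q v + a * b * qpolar q u v"
  by (simp add: qeval_add qeval_smul qpolar_smul qpolar_smul_left algebra_simps)

lemma qeval_lin_comb3:
  "qeval q (add3 (smul3 a u) (add3 (smul3 b v) (smul3 c w))) =
     a\<^sup>2 * qeval q u + b\<^sup>2 * qeval q v + c\<^sup>2 * qeval q w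
     + a * b * qpolar q u v + a * c * qpolar q u w + b * c * qpolar q v w"
  by (simp add: qeval_add qeval_smul qpolar_add qpolar_smul qpolar_smul_left algebra_simps)

lemma lin_prod_if_qeval_eq_product:
  assumes "\<And>x. qeval q x = dot3 l x * dot3 m x"
  shows "q = lin_prod l m"
proof -
  obtain a b c d e f where q: "q = (a, b, c, d, e, f)" by (cases q)
  obtain l1 l2 l3 where l: "l = (l1, l2, l3)" by (cases l)
  obtain m1 m2 m3 where m: "m = (m1, m2, m3)" by (cases m)
  have 1: "a = l1 * m1" using assms[of "(1, 0, 0)"] by (simp add: q l m vec3_defs)
  have 2: "b = l2 * m2" using assms[of "(0, 1, 0)"] by (simp add: q l m vec3_defs)
  have 3: "c = l3 * m3" using assms[of "(0, 0, 1)"] by (simp add: q l m vec3_defs)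
  have "a + b + d = (l1 + l2) * (m1 + m2)" using assms[of "(1, 1, 0)"] by (simp add: q l m vec3_defs)
  then have "d = l1 * m2 + l2 * m1" using 1 2 by (simp add: algebra_simps)
  moreover have "a + c + e = (l1 + l3) * (m1 + m3)" using assms[of "(1, 0, 1)"] by (simp add: q l m vec3_defs)
  then have "e = l1 * m3 + l3 * m1" using 1 3 by (simp add: algebra_simps)
  moreover have "b + c + f = (l2 + l3) * (m2 + m3)" using assms[of "(0, 1, 1)"] by (simp add: q l m vec3_defs)
  then have "f = l2 * m3 + l3 * m2" using 2 3 by (simp add: algebra_simps)
  ultimately show ?thesis using 1 2 3 by (simp add: q l m lin_prod_def)
qed

lemma dot3_cross3_left: "dot3 u (cross3 u v) = 0"
  by (cases u; cases v) (simp add: vec3_defs algebra_simps)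

lemma dot3_cross3_right: "dot3 v (cross3 u v) = 0"
  by (cases u; cases v) (simp add: vec3_defs algebra_simps)

lemma det3_eq_dot3_cross3: "det3 u v w = dot3 w (cross3 u v)"
  by (cases u; cases v; cases w) (simp add: vec3_defs algebra_simps)

lemma cross3_cross3: "cross3 a (cross3 u v) = add3 (smul3 (dot3 a v) u) (smul3 (- dot3 a u) v)"
  by (cases a; cases u; cases v) (simp add: vec3_defs algebra_simps)

lemma cross3_commute: "cross3 u v = smul3 (-1) (cross3 v u)"
  by (cases u; cases v) (simp add: vec3_defs algebra_simps)

lemma cross3_smul3_self: "cross3 u (smul3 c u) = (0, 0, 0)"
  by (cases u) (simp add: vec3_defs algebra_simps)

lemma cross3_zero_left [simp]: "cross3 (0, 0, 0) v = (0, 0, 0)"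
  and cross3_zero_right [simp]: "cross3 v (0, 0, 0) = (0, 0, 0)"
  by (cases v; simp add: vec3_defs)+

lemma cross3_lin_comb_left: "cross3 (add3 (smul3 a u) (smul3 b v)) v = smul3 a (cross3 u v)"
  by (cases u; cases v) (simp add: vec3_defs algebra_simps)

lemma cross3_lin_comb_right: "cross3 u (add3 (smul3 a u) (smul3 b v)) = smul3 b (cross3 u v)"
  by (cases u; cases v) (simp add: vec3_defs algebra_simps)

lemma cramer3:
  "smul3 (det3 e f g) x = add3 (smul3 (dot3 (cross3 f g) x) e)
      (add3 (smul3 (dot3 (cross3 g e) x) f) (smul3 (dot3 (cross3 e f) x) g))"
  by (cases e; cases f; cases g; cases x) (simp add: vec3_defs algebra_simps)

lemma parallel_if_cross3_eq_zero:
  assumes "cross3 u v = (0, 0, 0)" "u \<noteq> (0, 0, 0)"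
  shows "\<exists>c. v = smul3 c u"
proof -
  obtain u1 u2 u3 where u: "u = (u1, u2, u3)" by (cases u)
  obtain v1 v2 v3 where v: "v = (v1, v2, v3)" by (cases v)
  have e: "u2 * v3 = u3 * v2" "u3 * v1 = u1 * v3" "u1 * v2 = u2 * v1"
    using assms(1) by (auto simp: u v cross3_def)
  consider "u1 \<noteq> 0" | "u1 = 0" "u2 \<noteq> 0" | "u1 = 0" "u2 = 0" "u3 \<noteq> 0" using assms(2) u by auto
  then show ?thesis
  proof cases
    case 1
    with e show ?thesis by (intro exI[of _ "v1 / u1"]) (auto simp: u v smul3_def field_simps)
  next
    case 2
    with e show ?thesis by (intro exI[of _ "v2 / u2"]) (auto simp: u v smul3_def field_simps)
  next
    case 3
    with e show ?thesis by (intro exI[of _ "v3 / u3"]) (auto simp: u v smul3_def field_simps)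
  qed
qed

lemma cross3_parallel_if_orthogonal:
  assumes "dot3 a u = 0" "dot3 a v = 0" "a \<noteq> (0, 0, 0)"
  shows "\<exists>c. cross3 u v = smul3 c a"
proof -
  have "cross3 a (cross3 u v) = (0, 0, 0)"
    using assms by (simp add: cross3_cross3 smul3_def add3_def)
  then show ?thesis using parallel_if_cross3_eq_zero assms(3) by blast
qed

lemma lin_comb_eq_zero_imp:
  assumes "cross3 u v \<noteq> (0, 0, 0)" "add3 (smul3 a u) (smul3 b v) = (0, 0, 0)"
  shows "a = 0 \<and> b = 0"
proof -
  have "smul3 a (cross3 u v) = cross3 (add3 (smul3 a u) (smul3 b v)) v"
    by (rule cross3_lin_comb_left[symmetric])
  also have "\<dots> = (0, 0, 0)" using assms(2) by simp
  finally have a: "smul3 a (cross3 u v) = (0, 0, 0)" .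
  have "smul3 b (cross3 u v) = cross3 u (add3 (smul3 a u) (smul3 b v))"
    by (rule cross3_lin_comb_right[symmetric])
  also have "\<dots> = (0, 0, 0)" using assms(2) by simp
  finally have "smul3 b (cross3 u v) = (0, 0, 0)" .
  with a show ?thesis using assms(1) by (simp add: smul3_eq_zero_iff)
qed

lemma exists_det3_nonzero:
  assumes "cross3 u v \<noteq> (0, 0, 0)"
  shows "\<exists>z. det3 u v z \<noteq> 0"
proof -
  obtain c1 c2 c3 where c: "cross3 u v = (c1, c2, c3)" by (cases "cross3 u v")
  have "det3 u v (1, 0, 0) = c1" "det3 u v (0, 1, 0) = c2" "det3 u v (0, 0, 1) = c3"
    by (simp_all add: det3_eq_dot3_cross3 c dot3_def)
  then show ?thesis using assms c by metis
qed

lemma exists_orthogonal_pair: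
  assumes "a \<noteq> (0, 0, 0)"
  shows "\<exists>u v. dot3 a u = 0 \<and> dot3 a v = 0 \<and> cross3 u v \<noteq> (0, 0, 0)"
proof -
  obtain a1 a2 a3 where a: "a = (a1, a2, a3)" by (cases a)
  consider "a1 \<noteq> 0" | "a2 \<noteq> 0" | "a3 \<noteq> 0" using assms a by auto
  then show ?thesis
  proof cases
    case 1
    then show ?thesis
      by (intro exI[of _ "(a2, -a1, 0)"] exI[of _ "(a3, 0, -a1)"]) (simp add: a vec3_defs algebra_simps)
  next
    case 2
    then show ?thesis
      by (intro exI[of _ "(a2, -a1, 0)"] exI[of _ "(0, a3, -a2)"]) (simp add: a vec3_defs algebra_simps)
  next
    case 3
    then show ?thesis
      by (intro exI[of _ "(a3, 0, -a1)"] exI[of _ "(0, a3, -a2)"]) (simp add: a vec3_defs algebra_simps)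
  qed
qed

lemma proj_point_self: "u \<in> proj_point u"
  unfolding proj_point_def by (rule CollectI, rule exI[of _ 1]) simp

lemma proj_point_eq_iff:
  assumes "u \<noteq> (0, 0, 0)"
  shows "proj_point u = proj_point v \<longleftrightarrow> (\<exists>c. c \<noteq> 0 \<and> v = smul3 c u)"
proof
  assume "proj_point u = proj_point v"
  then have "v \<in> proj_point u" using proj_point_self by metis
  then show "\<exists>c. c \<noteq> 0 \<and> v = smul3 c u" by (auto simp: proj_point_def)
next
  assume "\<exists>c. c \<noteq> 0 \<and> v = smul3 c u"
  then obtain c where c: "c \<noteq> 0" "v = smul3 c u" by auto
  have "smul3 d v = smul3 (d * c) u" "smul3 d u = smul3 (d / c) v" for d
    using c by (simp_all add: smul3_smul3)
  then show "proj_point u = proj_point v"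
    unfolding proj_point_def using c(1) by (metis (no_types) divide_eq_0_iff mult_eq_0_iff)
qed

lemma proj_point_eq_iff_cross3:
  assumes "u \<noteq> (0, 0, 0)" "v \<noteq> (0, 0, 0)"
  shows "proj_point u = proj_point v \<longleftrightarrow> cross3 u v = (0, 0, 0)"
proof
  assume "proj_point u = proj_point v"
  then show "cross3 u v = (0, 0, 0)"
    using proj_point_eq_iff assms(1) cross3_smul3_self by metis
next
  assume "cross3 u v = (0, 0, 0)"
  then obtain c where c: "v = smul3 c u" using parallel_if_cross3_eq_zero assms(1) by blast
  then have "c \<noteq> 0" using assms(2) by (auto simp: smul3_eq_zero_iff)
  then show "proj_point u = proj_point v" using c proj_point_eq_iff assms(1) by blast
qed

lemma proj_point_in_pline_iff:
  assumes "u \<noteq> (0, 0, 0)"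
  shows "proj_point u \<in> pline a \<longleftrightarrow> dot3 a u = 0"
proof
  assume "proj_point u \<in> pline a"
  then obtain v where v: "proj_point u = proj_point v" "dot3 a v = 0"
    by (auto simp: pline_def)
  then obtain c where "c \<noteq> 0" "v = smul3 c u" using proj_point_eq_iff assms by blast
  then show "dot3 a u = 0" using v by (simp add: dot3_smul)
qed (use assms in \<open>unfold pline_def, blast\<close>)

lemma proj_point_in_conic_pts_iff:
  assumes "u \<noteq> (0, 0, 0)"
  shows "proj_point u \<in> conic_pts q \<longleftrightarrow> qeval q u = 0"
proof
  assume "proj_point u \<in> conic_pts q"
  then obtain v where v: "proj_point u = proj_point v" "qeval q v = 0"
    by (auto simp: conic_pts_def)
  then obtain c where "c \<noteq> 0" "v = smul3 c u" using proj_point_eq_iff assms by blast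
  then show "qeval q u = 0" using v by (simp add: qeval_smul)
qed (use assms in \<open>unfold conic_pts_def, blast\<close>)

lemma pcollinear_proj_point_iff:
  assumes "u \<noteq> (0, 0, 0)" "v \<noteq> (0, 0, 0)" "w \<noteq> (0, 0, 0)" "cross3 u v \<noteq> (0, 0, 0)"
  shows "pcollinear (proj_point u) (proj_point v) (proj_point w) \<longleftrightarrow> det3 u v w = 0"
proof
  assume "pcollinear (proj_point u) (proj_point v) (proj_point w)"
  then obtain a where a: "a \<noteq> (0, 0, 0)" "proj_point u \<in> pline a" "proj_point v \<in> pline a"
     "proj_point w \<in> pline a" by (auto simp: pcollinear_def plines_def)
  then have d: "dot3 a u = 0" "dot3 a v = 0" "dot3 a w = 0"
    using assms(1-3) proj_point_in_pline_iff by blast+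
  obtain c where "cross3 u v = smul3 c a" using cross3_parallel_if_orthogonal d a by blast
  then show "det3 u v w = 0" using d(3) by (simp add: det3_eq_dot3_cross3 dot3_commute[of w] dot3_smul_left)
next
  assume "det3 u v w = 0"
  then have "dot3 (cross3 u v) w = 0" by (simp add: det3_eq_dot3_cross3 dot3_commute)
  moreover have "dot3 (cross3 u v) u = 0" "dot3 (cross3 u v) v = 0"
    using dot3_cross3_left dot3_cross3_right dot3_commute by metis+
  ultimately show "pcollinear (proj_point u) (proj_point v) (proj_point w)"
    using assms proj_point_in_pline_iff unfolding pcollinear_def plines_def by blast
qed

lemma pcollinear_swap12: "pcollinear P Q R \<longleftrightarrow> pcollinear Q P R"
  and pcollinear_swap23: "pcollinear P Q R \<longleftrightarrow> pcollinear P R Q"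
  by (auto simp: pcollinear_def)

definition proj_rep :: "'k::field vec3 set \<Rightarrow> 'k vec3" where
  "proj_rep P = (SOME v. v \<noteq> (0, 0, 0) \<and> P = proj_point v)"

lemma proj_rep: "P \<in> PG2 \<Longrightarrow> proj_rep P \<noteq> (0, 0, 0) \<and> P = proj_point (proj_rep P)"
  unfolding proj_rep_def by (rule someI_ex) (auto simp: PG2_def)

lemma pline_subset_PG2: "pline a \<subseteq> PG2"
  and conic_pts_subset_PG2: "conic_pts q \<subseteq> PG2"
  by (auto simp: pline_def conic_pts_def PG2_def)

lemma line_through_points:
  assumes "P \<in> PG2" "Q \<in> PG2" "P \<noteq> Q"
  shows "\<exists>l\<in>plines. P \<in> l \<and> Q \<in> l"
proof -
  let ?u = "proj_rep P" and ?v = "proj_rep Q"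
  have u: "?u \<noteq> (0, 0, 0)" "P = proj_point ?u" and v: "?v \<noteq> (0, 0, 0)" "Q = proj_point ?v"
    using proj_rep assms(1,2) by blast+
  have "cross3 ?u ?v \<noteq> (0, 0, 0)" using proj_point_eq_iff_cross3 u v assms(3) by metis
  moreover have "P \<in> pline (cross3 ?u ?v)" "Q \<in> pline (cross3 ?u ?v)"
    using u v proj_point_in_pline_iff dot3_cross3_left dot3_cross3_right dot3_commute by metis+
  ultimately show ?thesis unfolding plines_def by blast
qed

lemma pline_smul3: "c \<noteq> 0 \<Longrightarrow> pline (smul3 c a) = pline a"
  by (simp add: pline_def dot3_smul_left)

lemma plines_eq_if_two_common_points:
  assumes "l \<in> plines" "l' \<in> plines" "P \<noteq> Q" "P \<in> l" "Q \<in> l" "P \<in> l'" "Q \<in> l'"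
  shows "l = l'"
proof -
  obtain a b where ab: "a \<noteq> (0, 0, 0)" "l = pline a" "b \<noteq> (0, 0, 0)" "l' = pline b"
    using assms(1,2) unfolding plines_def by blast
  obtain u v where uv: "u \<noteq> (0, 0, 0)" "P = proj_point u" "v \<noteq> (0, 0, 0)" "Q = proj_point v"
    using assms(4,5) ab(2) unfolding pline_def by blast
  have "dot3 a u = 0" "dot3 a v = 0" "dot3 b u = 0" "dot3 b v = 0"
    using assms(4-7) ab uv proj_point_in_pline_iff by blast+
  then obtain c c' where c: "cross3 u v = smul3 c a" "cross3 u v = smul3 c' b"
    using cross3_parallel_if_orthogonal ab(1,3) by metis
  have "cross3 u v \<noteq> (0, 0, 0)" using proj_point_eq_iff_cross3 uv assms(3) by metis
  then have "c \<noteq> 0" "c' \<noteq> 0" using c smul3_eq_zero_iff by metis+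
  have "b = smul3 (1 / c') (smul3 c' b)" using \<open>c' \<noteq> 0\<close> by (simp add: smul3_smul3)
  also have "\<dots> = smul3 (c / c') a" using c by (simp add: smul3_smul3)
  finally have "pline b = pline a"
    using pline_smul3[of "c / c'" a] \<open>c \<noteq> 0\<close> \<open>c' \<noteq> 0\<close> by simp
  then show ?thesis using ab(2,4) by simp
qed

section \<open>A polar frame of an irreducible conic adapted to a line\<close>

lemma not_irreducible_if_line_on_conic:
  assumes "qeval q u = 0" "qeval q v = 0" "qpolar q u v = 0" "cross3 u v \<noteq> (0, 0, 0)"
  shows "\<not> irreducible_qform q"
proof -
  obtain z where z: "det3 u v z \<noteq> 0" using exists_det3_nonzero assms(4) by blast
  define D where "D = det3 u v z"
  define m where "m = add3 (smul3 (qeval q z) (cross3 u v))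
    (add3 (smul3 (qpolar q v z) (cross3 z u)) (smul3 (qpolar q u z) (cross3 v z)))"
  have "qeval q x = dot3 (smul3 (1 / D\<^sup>2) (cross3 u v)) x * dot3 m x" for x
  proof -
    have "D\<^sup>2 * qeval q x = qeval q (smul3 D x)" by (simp add: qeval_smul)
    also have "\<dots> = qeval q (add3 (smul3 (dot3 (cross3 v z) x) u)
      (add3 (smul3 (dot3 (cross3 z u) x) v) (smul3 (dot3 (cross3 u v) x) z)))"
      unfolding D_def cramer3 ..
    also have "\<dots> = dot3 (cross3 u v) x * dot3 m x"
      unfolding qeval_lin_comb3 m_def using assms(1-3)
      by (simp add: dot3_add_left dot3_smul_left power2_eq_square algebra_simps)
    finally show ?thesis using z unfolding D_def by (simp add: dot3_smul_left field_simps)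
  qed
  then show ?thesis
    unfolding irreducible_qform_def using lin_prod_if_qeval_eq_product by blast
qed

lemma quadratic_has_root:
  fixes a b c :: "'k::alg_closed_field"
  assumes "a \<noteq> 0"
  shows "\<exists>x. a * x\<^sup>2 + b * x + c = 0"
proof -
  let ?coeff = "\<lambda>k::nat. if k = 0 then c else if k = 1 then b else a"
  obtain x where "(\<Sum>k\<le>2. ?coeff k * x ^ k) = 0" using alg_closed[of 2 ?coeff] assms by auto
  then show ?thesis by (auto simp: numeral_2_eq_2 algebra_simps)
qed

lemma exists_square_root:
  fixes d :: "'k::alg_closed_field"
  shows "\<exists>r. r\<^sup>2 = d"
  using quadratic_has_root[of 1 0 "- d"] by auto

lemma exists_conic_point_on_line:
  fixes q :: "'k::alg_closed_field qform"
  assumes "cross3 u v \<noteq> (0, 0, 0)"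
  shows "\<exists>a b. (a \<noteq> 0 \<or> b \<noteq> 0) \<and> qeval q (add3 (smul3 a u) (smul3 b v)) = 0"
proof (cases "qeval q u = 0")
  case True
  then show ?thesis using qeval_lin_comb2[of q 1 u 0 v] by (intro exI[of _ 1] exI[of _ 0]) simp
next
  case False
  then obtain x where "qeval q u * x\<^sup>2 + qpolar q u v * x + qeval q v = 0"
    using quadratic_has_root by blast
  then have "qeval q (add3 (smul3 x u) (smul3 1 v)) = 0"
    using qeval_lin_comb2[of q x u 1 v] by (simp add: algebra_simps)
  then show ?thesis by (metis one_neq_zero)
qed

lemma exists_conic_point_on_pline:
  fixes q :: "'k::alg_closed_field qform"
  assumes "a \<noteq> (0, 0, 0)"
  shows "\<exists>e w. e \<noteq> (0, 0, 0) \<and> qeval q e = 0 \<and> dot3 a e = 0 \<and> dot3 a w = 0 \<and>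
    cross3 e w \<noteq> (0, 0, 0)"
proof -
  obtain u v where uv: "dot3 a u = 0" "dot3 a v = 0" "cross3 u v \<noteq> (0, 0, 0)"
    using exists_orthogonal_pair[OF assms] by blast
  obtain s t where st: "s \<noteq> 0 \<or> t \<noteq> 0" "qeval q (add3 (smul3 s u) (smul3 t v)) = 0"
    using exists_conic_point_on_line[OF uv(3)] by blast
  define e where "e = add3 (smul3 s u) (smul3 t v)"
  have "e \<noteq> (0, 0, 0)" using lin_comb_eq_zero_imp[OF uv(3)] st(1) unfolding e_def by blast
  moreover have "dot3 a e = 0" unfolding e_def by (simp add: dot3_add dot3_smul uv)
  moreover have "\<exists>w. dot3 a w = 0 \<and> cross3 e w \<noteq> (0, 0, 0)"
  proof (cases "t = 0")
    case True
    have "cross3 e v = smul3 s (cross3 u v)" unfolding e_def by (rule cross3_lin_comb_left)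
    then show ?thesis using True st(1) uv(2,3) by (metis smul3_eq_zero_iff)
  next
    case False
    have "cross3 u e = smul3 t (cross3 u v)" unfolding e_def by (rule cross3_lin_comb_right)
    then have "cross3 e u = smul3 (- t) (cross3 u v)"
      using cross3_commute[of e u] by (simp add: smul3_smul3)
    then show ?thesis using False uv(1,3) by (metis neg_equal_0_iff_equal smul3_eq_zero_iff)
  qed
  ultimately show ?thesis using st(2) unfolding e_def by blast
qed

text \<open>In a polar frame the points \<open>e\<close>, \<open>f\<close> lie on the conic and \<open>g\<close> is the pole of the
  line \<open>ef\<close>; in the corresponding coordinates the conic reads \<open>xy + \<kappa> z\<^sup>2 = 0\<close>.\<close>

definition polar_frame :: "'k::field qform \<Rightarrow> 'k vec3 \<Rightarrow> 'k vec3 \<Rightarrow> 'k vec3 \<Rightarrow> bool" where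
  "polar_frame q e f g \<longleftrightarrow> qeval q e = 0 \<and> qeval q f = 0 \<and> qpolar q e g = 0 \<and>
     qpolar q f g = 0 \<and> qpolar q e f \<noteq> 0 \<and> qeval q g \<noteq> 0"

lemma polar_frame_secant:
  assumes irr: "irreducible_qform q" and e: "e \<noteq> (0, 0, 0)" "qeval q e = 0"
    and w: "cross3 e w \<noteq> (0, 0, 0)" "qpolar q e w \<noteq> 0"
  shows "\<exists>f g c. polar_frame q e f g \<and> c \<noteq> 0 \<and> cross3 e f = smul3 c (cross3 e w)"
proof -
  define f where "f = add3 (smul3 (- qeval q w) e) (smul3 (qpolar q e w) w)"
  have qee: "qpolar q e e = 0" using e(2) by (simp add: qpolar_self)
  have qf: "qeval q f = 0"
    unfolding f_def qeval_lin_comb2 using e(2) by (simp add: power2_eq_square algebra_simps)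
  have ef: "qpolar q e f = (qpolar q e w)\<^sup>2"
    unfolding f_def by (simp add: qpolar_add qpolar_smul qee power2_eq_square)
  define g where "g = cross3 (qgrad q e) (qgrad q f)"
  have eg: "qpolar q e g = 0" and fg: "qpolar q f g = 0"
    unfolding g_def qpolar_def by (rule dot3_cross3_left, rule dot3_cross3_right)
  have "g \<noteq> (0, 0, 0)"
  proof
    assume "g = (0, 0, 0)"
    moreover have "qgrad q e \<noteq> (0, 0, 0)"
      using ef w(2) qpolar_eq_zero_if_qgrad_eq_zero by fastforce
    ultimately obtain c where c: "qgrad q f = smul3 c (qgrad q e)"
      using parallel_if_cross3_eq_zero unfolding g_def by blast
    have "c * qpolar q e f = qpolar q f f" by (simp add: qpolar_def c dot3_smul_left)
    then have "c = 0" using qf ef w(2) by (simp add: qpolar_self)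
    then have "qpolar q f e = 0" by (simp add: qpolar_def c dot3_smul_left)
    then show False using ef w(2) qpolar_commute[of q f e] by simp
  qed
  have "qeval q g \<noteq> 0"
  proof
    assume qg: "qeval q g = 0"
    have "cross3 e g \<noteq> (0, 0, 0)"
    proof
      assume "cross3 e g = (0, 0, 0)"
      then obtain c where c: "g = smul3 c e" using parallel_if_cross3_eq_zero e(1) by blast
      then have "c * qpolar q f e = 0" using fg by (simp add: qpolar_smul)
      then have "c = 0" using ef w(2) qpolar_commute[of q f e] by simp
      then show False using \<open>g \<noteq> (0, 0, 0)\<close> c by (simp add: smul3_eq_zero_iff)
    qed
    then show False using not_irreducible_if_line_on_conic[OF e(2) qg eg] irr by blast
  qed
  then have "polar_frame q e f g"
    using e(2) qf eg fg ef w(2) unfolding polar_frame_def by simp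
  moreover have "cross3 e f = smul3 (qpolar q e w) (cross3 e w)"
    unfolding f_def by (rule cross3_lin_comb_right)
  ultimately show ?thesis using w(2) by blast
qed

lemma exists_conjugate_point_independent:
  assumes "qgrad q w \<noteq> (0, 0, 0)" "e \<noteq> (0, 0, 0)"
  shows "\<exists>m. qpolar q w m = 0 \<and> cross3 e m \<noteq> (0, 0, 0)"
proof -
  obtain m1 m2 where m: "dot3 (qgrad q w) m1 = 0" "dot3 (qgrad q w) m2 = 0"
    "cross3 m1 m2 \<noteq> (0, 0, 0)"
    using exists_orthogonal_pair[OF assms(1)] by blast
  have "cross3 e m1 \<noteq> (0, 0, 0) \<or> cross3 e m2 \<noteq> (0, 0, 0)"
  proof (rule ccontr)
    assume "\<not> ?thesis"
    then obtain c1 c2 where "m1 = smul3 c1 e" "m2 = smul3 c2 e"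
      using parallel_if_cross3_eq_zero assms(2) by blast
    then have "cross3 m1 m2 = (0, 0, 0)" by (cases e) (simp add: vec3_defs algebra_simps)
    with m(3) show False by simp
  qed
  with m(1,2) show ?thesis unfolding qpolar_def by blast
qed

lemma polar_frame_tangent:
  fixes q :: "'k::alg_closed_field qform"
  assumes irr: "irreducible_qform q" and two: "(2::'k) \<noteq> 0"
    and e: "e \<noteq> (0, 0, 0)" "qeval q e = 0"
    and w: "cross3 e w \<noteq> (0, 0, 0)" "qpolar q e w = 0"
  shows "\<exists>f. polar_frame q e f w"
proof -
  have qw: "qeval q w \<noteq> 0"
    using not_irreducible_if_line_on_conic[OF e(2) _ w(2) w(1)] irr by blast
  have "qgrad q w \<noteq> (0, 0, 0)"
  proof
    assume "qgrad q w = (0, 0, 0)"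
    then have "qpolar q w w = 0" by (rule qpolar_eq_zero_if_qgrad_eq_zero)
    then have "2 * qeval q w = 0" by (simp add: qpolar_self)
    then show False using qw two by simp
  qed
  then obtain m where wm: "qpolar q w m = 0" and em: "cross3 e m \<noteq> (0, 0, 0)"
    using exists_conjugate_point_independent e(1) by blast
  show ?thesis
  proof (cases "qpolar q e m = 0")
    case False
    define lam where "lam = - qeval q m / qpolar q e m"
    define f where "f = add3 (smul3 lam e) (smul3 1 m)"
    have "qeval q f = lam\<^sup>2 * qeval q e + 1\<^sup>2 * qeval q m + lam * 1 * qpolar q e m"
      unfolding f_def by (rule qeval_lin_comb2)
    also have "\<dots> = 0" using e(2) False by (simp add: lam_def)
    finally have "qeval q f = 0" .
    moreover have "qpolar q e f \<noteq> 0"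
      using e(2) False unfolding f_def by (simp add: qpolar_add qpolar_smul qpolar_self)
    moreover have "qpolar q f w = 0"
      using w(2) wm qpolar_commute[of q m w] unfolding f_def
      by (simp add: qpolar_add_left qpolar_smul_left)
    ultimately have "polar_frame q e f w" using e(2) w(2) qw unfolding polar_frame_def by simp
    then show ?thesis ..
  next
    case True
    have wm_indep: "cross3 w m \<noteq> (0, 0, 0)"
    proof
      assume "cross3 w m = (0, 0, 0)"
      moreover have "w \<noteq> (0, 0, 0)" using qw by auto
      ultimately obtain c where c: "m = smul3 c w" using parallel_if_cross3_eq_zero by blast
      then have "c * (2 * qeval q w) = 0" using wm by (simp add: qpolar_smul qpolar_self)
      then have "c = 0" using two qw by simp
      then show False using c em by simp
    qed
    obtain s t where st: "s \<noteq> 0 \<or> t \<noteq> 0" "qeval q (add3 (smul3 s w) (smul3 t m)) = 0"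
      using exists_conic_point_on_line[OF wm_indep] by blast
    define z where "z = add3 (smul3 s w) (smul3 t m)"
    have ez: "qpolar q e z = 0" unfolding z_def by (simp add: qpolar_add qpolar_smul w(2) True)
    have "cross3 e z \<noteq> (0, 0, 0)"
    proof
      assume "cross3 e z = (0, 0, 0)"
      then obtain c where c: "z = smul3 c e" using parallel_if_cross3_eq_zero e(1) by blast
      have "s * (2 * qeval q w) = qpolar q w z" unfolding z_def
        by (simp add: qpolar_add qpolar_smul qpolar_self wm)
      also have "\<dots> = 0"
        using c w(2) qpolar_commute[of q w e] by (simp add: qpolar_smul)
      finally have "s = 0" using two qw by simp
      then have "t \<noteq> 0" "z = smul3 t m"
        using st(1) unfolding z_def by (simp, cases w, cases m, simp add: vec3_defs)
      have tm: "smul3 t m = smul3 c e" using \<open>z = smul3 t m\<close> c by simp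
      have "m = smul3 (1 / t) (smul3 t m)" using \<open>t \<noteq> 0\<close> by (simp add: smul3_smul3)
      also have "\<dots> = smul3 (c / t) e" unfolding tm by (simp add: smul3_smul3)
      finally have "cross3 e m = (0, 0, 0)" by (simp add: cross3_smul3_self)
      with em show False by simp
    qed
    then show ?thesis
      using not_irreducible_if_line_on_conic[OF e(2) st(2)[folded z_def] ez] irr by blast
  qed
qed

lemma exists_polar_frame:
  fixes q :: "'k::alg_closed_field qform"
  assumes irr: "irreducible_qform q" and a: "a \<noteq> (0, 0, 0)" and two: "(2::'k) \<noteq> 0"
  shows "\<exists>e f g c. polar_frame q e f g \<and> c \<noteq> 0 \<and>
    (cross3 e f = smul3 c a \<or> cross3 g e = smul3 c a)"
proof -
  obtain e w where ew: "e \<noteq> (0, 0, 0)" "qeval q e = 0" "dot3 a e = 0" "dot3 a w = 0"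
    "cross3 e w \<noteq> (0, 0, 0)"
    using exists_conic_point_on_pline[OF a] by blast
  obtain c where c: "cross3 e w = smul3 c a" using cross3_parallel_if_orthogonal ew(3,4) a by blast
  then have "c \<noteq> 0" using ew(5) by (auto simp: smul3_def)
  show ?thesis
  proof (cases "qpolar q e w = 0")
    case False
    then obtain f g d where "polar_frame q e f g" "d \<noteq> 0" "cross3 e f = smul3 d (cross3 e w)"
      using polar_frame_secant[OF irr ew(1,2,5)] by blast
    moreover from this(3) have "cross3 e f = smul3 (d * c) a" using c by (simp add: smul3_smul3)
    ultimately show ?thesis using \<open>c \<noteq> 0\<close> by (intro exI[of _ e] exI[of _ f] exI[of _ g] exI[of _ "d * c"]) auto
  next
    case True
    then obtain f where "polar_frame q e f w"
      using polar_frame_tangent[OF irr two ew(1,2,5)] by blast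
    moreover have "cross3 w e = smul3 (- c) a"
      using c cross3_commute[of w e] by (simp add: smul3_smul3)
    ultimately show ?thesis using \<open>c \<noteq> 0\<close> by (intro exI[of _ e] exI[of _ f] exI[of _ w] exI[of _ "- c"]) auto
  qed
qed

definition frame_coords :: "'k::field vec3 \<Rightarrow> 'k vec3 \<Rightarrow> 'k vec3 \<Rightarrow> 'k vec3 \<Rightarrow> 'k vec3" where
  "frame_coords e f g x = (dot3 (cross3 f g) x, dot3 (cross3 g e) x, dot3 (cross3 e f) x)"

definition frame_point :: "'k::field vec3 \<Rightarrow> 'k vec3 \<Rightarrow> 'k vec3 \<Rightarrow> 'k vec3 \<Rightarrow> 'k vec3" where
  "frame_point e f g t = (case t of (a, b, c) \<Rightarrow> add3 (smul3 a e) (add3 (smul3 b f) (smul3 c g)))"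

lemma smul3_det3_eq_frame_point: "smul3 (det3 e f g) x = frame_point e f g (frame_coords e f g x)"
  by (simp add: frame_point_def frame_coords_def cramer3)

lemma frame_point_smul3: "frame_point e f g (smul3 c t) = smul3 c (frame_point e f g t)"
  by (cases e; cases f; cases g; cases t) (simp add: frame_point_def vec3_defs algebra_simps)

lemma det3_dot3_rows:
  "det3 (dot3 p1 u, dot3 p2 u, dot3 p3 u) (dot3 p1 v, dot3 p2 v, dot3 p3 v)
     (dot3 p1 w, dot3 p2 w, dot3 p3 w) = det3 p1 p2 p3 * det3 u v w"
  by (cases p1; cases p2; cases p3; cases u; cases v; cases w) (simp add: vec3_defs algebra_simps)

lemma det3_cross3_adjugate: "det3 (cross3 f g) (cross3 g e) (cross3 e f) = (det3 e f g)\<^sup>2"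
  by (cases e; cases f; cases g) (simp add: vec3_defs power2_eq_square algebra_simps)

lemma det3_frame_coords:
  "det3 (frame_coords e f g u) (frame_coords e f g v) (frame_coords e f g w) = (det3 e f g)\<^sup>2 * det3 u v w"
  unfolding frame_coords_def det3_dot3_rows det3_cross3_adjugate ..

lemma frame_coords_eq_smul3_imp:
  assumes "det3 e f g \<noteq> 0" "frame_coords e f g u = smul3 c (frame_coords e f g v)"
  shows "u = smul3 c v"
proof -
  have "smul3 (det3 e f g) u = smul3 c (smul3 (det3 e f g) v)"
    by (simp add: smul3_det3_eq_frame_point assms(2) frame_point_smul3)
  also have "\<dots> = smul3 (det3 e f g) (smul3 c v)" by (simp add: smul3_smul3 mult.commute)
  finally show ?thesis using smul3_cancel assms(1) by blast
qed

lemma frame_coords_nonzero: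
  assumes "det3 e f g \<noteq> 0" "x \<noteq> (0, 0, 0)"
  shows "frame_coords e f g x \<noteq> (0, 0, 0)"
proof
  assume "frame_coords e f g x = (0, 0, 0)"
  then have "frame_coords e f g x = smul3 0 (frame_coords e f g x)" by (simp add: smul3_def)
  then have "x = smul3 0 x" by (rule frame_coords_eq_smul3_imp[OF assms(1)])
  then show False using assms(2) by (simp add: smul3_def split: prod.splits)
qed

lemma polar_frame_det3_nonzero:
  fixes q :: "'k::field qform"
  assumes frame: "polar_frame q e f g" and two: "(2::'k) \<noteq> 0"
  shows "det3 e f g \<noteq> 0"
proof
  assume "det3 e f g = 0"
  have pf: "qeval q e = 0" "qeval q f = 0" "qpolar q e g = 0" "qpolar q f g = 0"
    "qpolar q e f \<noteq> 0" "qeval q g \<noteq> 0"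
    using frame by (auto simp: polar_frame_def)
  have self: "qpolar q e e = 0" "qpolar q f f = 0" "qpolar q f e = qpolar q e f"
    using pf by (simp_all add: qpolar_self qpolar_commute)
  have relation: "add3 (smul3 (dot3 (cross3 f g) x) e)
      (add3 (smul3 (dot3 (cross3 g e) x) f) (smul3 (dot3 (cross3 e f) x) g)) = (0, 0, 0)" for x
    using cramer3[of e f g x] \<open>det3 e f g = 0\<close> by (simp add: smul3_def split: prod.splits)
  have "dot3 (cross3 g e) x * qpolar q e f = 0" for x
    using arg_cong[OF relation[of x], of "qpolar q e"] by (simp add: qpolar_add qpolar_smul self pf)
  then have "dot3 (cross3 g e) x = 0" for x using pf(5) by simp
  then have "cross3 g e = (0, 0, 0)" by (rule eq_zero_if_dot3_eq_zero)
  moreover have "g \<noteq> (0, 0, 0)" using pf(6) by (auto simp: qeval_def)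
  ultimately obtain c where c: "e = smul3 c g" using parallel_if_cross3_eq_zero by blast
  have "c * (2 * qeval q g) = 0" using pf(3) by (simp add: c qpolar_smul_left qpolar_self)
  then have "e = (0, 0, 0)" using c two pf(6) by (simp add: smul3_def split: prod.splits)
  then show False using pf(5) qpolar_commute[of q e f] by simp
qed

lemma qeval_polar_frame:
  assumes "polar_frame q e f g"
  shows "(det3 e f g)\<^sup>2 * qeval q x = qpolar q e f * (dot3 (cross3 f g) x * dot3 (cross3 g e) x)
    + qeval q g * (dot3 (cross3 e f) x)\<^sup>2"
proof -
  have "(det3 e f g)\<^sup>2 * qeval q x = qeval q (smul3 (det3 e f g) x)" by (simp add: qeval_smul)
  also have "\<dots> = qeval q (add3 (smul3 (dot3 (cross3 f g) x) e)
      (add3 (smul3 (dot3 (cross3 g e) x) f) (smul3 (dot3 (cross3 e f) x) g)))"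
    by (simp add: cramer3)
  also have "\<dots> = qpolar q e f * (dot3 (cross3 f g) x * dot3 (cross3 g e) x)
      + qeval q g * (dot3 (cross3 e f) x)\<^sup>2"
    unfolding qeval_lin_comb3 using assms by (simp add: polar_frame_def algebra_simps)
  finally show ?thesis .
qed

lemma det3_conic_param:
  assumes "\<rho> \<noteq> 0"
  shows "det3 (smul3 b1 (s\<^sup>2, 1, s / \<rho>)) (smul3 b2 (t\<^sup>2, 1, t / \<rho>)) (x, y, z)
     = b1 * b2 * (t - s) * ((x + s * t * y) - \<rho> * (s + t) * z) / \<rho>"
  using assms by (simp add: vec3_defs field_simps power2_eq_square)

section \<open>Rational parametrization of the conic\<close>

text \<open>After the frame is normalized by \<open>\<rho>\<close>, the conic point with parameter \<open>t\<close> has frame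
  coordinates proportional to \<open>(t\<^sup>2, 1, t/\<rho>)\<close>, and the chord through the points with parameters
  \<open>s\<close>, \<open>t\<close> is \<open>x + s t y - \<rho> (s + t) z = 0\<close>.\<close>

locale conic_frame =
  fixes q :: "'k::field qform" and e f g :: "'k vec3" and \<rho> :: 'k
  assumes frame: "polar_frame q e f g" and two: "(2::'k) \<noteq> 0"
    and rho: "\<rho>\<^sup>2 * qpolar q e f = - qeval q g"
begin

abbreviation "A x \<equiv> dot3 (cross3 f g) x"
abbreviation "B x \<equiv> dot3 (cross3 g e) x"
abbreviation "G x \<equiv> dot3 (cross3 e f) x"

definition param :: "'k vec3 \<Rightarrow> 'k" where
  "param x = \<rho> * G x / B x"

lemma det_nonzero: "det3 e f g \<noteq> 0"
  using polar_frame_det3_nonzero[OF frame two] .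

lemma rho_nonzero: "\<rho> \<noteq> 0"
  using rho frame by (auto simp: polar_frame_def)

lemma conic_equation: "qeval q u = 0 \<Longrightarrow> A u * B u = \<rho>\<^sup>2 * (G u)\<^sup>2"
proof -
  assume "qeval q u = 0"
  then have "qpolar q e f * (A u * B u) + qeval q g * (G u)\<^sup>2 = 0"
    using qeval_polar_frame[OF frame, of u] by simp
  moreover have "qeval q g = - (\<rho>\<^sup>2 * qpolar q e f)" using rho by simp
  ultimately have "qpolar q e f * (A u * B u - \<rho>\<^sup>2 * (G u)\<^sup>2) = 0" by (simp add: algebra_simps)
  then show ?thesis using frame by (simp add: polar_frame_def)
qed

lemma frame_coords_conic_point:
  assumes "qeval q u = 0" "B u \<noteq> 0"
  shows "frame_coords e f g u = smul3 (B u) ((param u)\<^sup>2, 1, param u / \<rho>)"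
proof -
  have "A u = \<rho>\<^sup>2 * (G u)\<^sup>2 / B u" using conic_equation[OF assms(1)] assms(2) by (simp add: field_simps)
  then show ?thesis
    using assms(2) rho_nonzero by (simp add: frame_coords_def smul3_def param_def field_simps power2_eq_square)
qed

lemma param_eq_iff:
  assumes "u \<noteq> (0, 0, 0)" "v \<noteq> (0, 0, 0)" "qeval q u = 0" "qeval q v = 0" "B u \<noteq> 0" "B v \<noteq> 0"
  shows "param u = param v \<longleftrightarrow> proj_point u = proj_point v"
proof
  assume "param u = param v"
  then have "frame_coords e f g u = smul3 (B u / B v) (frame_coords e f g v)"
    using frame_coords_conic_point assms(3-6) by (simp add: smul3_smul3)
  then have "u = smul3 (B u / B v) v" by (rule frame_coords_eq_smul3_imp[OF det_nonzero])
  moreover have "B u / B v \<noteq> 0" using assms(5,6) by simp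
  ultimately show "proj_point u = proj_point v" using proj_point_eq_iff[OF assms(2)] by metis
next
  assume "proj_point u = proj_point v"
  then obtain c where "c \<noteq> 0" "v = smul3 c u" using proj_point_eq_iff[OF assms(1)] by blast
  then show "param u = param v" by (simp add: param_def dot3_smul)
qed

lemma pcollinear_iff_chord_equation:
  assumes "u \<noteq> (0, 0, 0)" "v \<noteq> (0, 0, 0)" "qeval q u = 0" "qeval q v = 0" "B u \<noteq> 0" "B v \<noteq> 0"
    and "proj_point u \<noteq> proj_point v" and "w \<noteq> (0, 0, 0)"
  shows "pcollinear (proj_point u) (proj_point v) (proj_point w) \<longleftrightarrow>
    A w + param u * param v * B w - \<rho> * (param u + param v) * G w = 0"
proof -
  have "param u \<noteq> param v" using param_eq_iff assms(1-7) by blast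
  have "cross3 u v \<noteq> (0, 0, 0)" using proj_point_eq_iff_cross3 assms(1,2,7) by blast
  then have "pcollinear (proj_point u) (proj_point v) (proj_point w) \<longleftrightarrow> det3 u v w = 0"
    using pcollinear_proj_point_iff assms(1,2,8) by blast
  also have "\<dots> \<longleftrightarrow> det3 (frame_coords e f g u) (frame_coords e f g v) (frame_coords e f g w) = 0"
    using det_nonzero by (simp add: det3_frame_coords)
  also have "\<dots> \<longleftrightarrow> A w + param u * param v * B w - \<rho> * (param u + param v) * G w = 0"
    unfolding frame_coords_conic_point[OF assms(3,5)] frame_coords_conic_point[OF assms(4,6)]
    using assms(5,6) rho_nonzero \<open>param u \<noteq> param v\<close>
    by (simp add: frame_coords_def det3_conic_param)
  finally show ?thesis .
qed

end

section \<open>Secant and tangent charts\<close>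

text \<open>A chart assigns parameters to the points of the conic off the line \<open>pline a\<close> and to the
  points of the line, so that collinearity becomes multiplicative (the line is a secant) or
  additive (the line is a tangent).\<close>

definition secant_chart ::
  "'k::field qform \<Rightarrow> 'k vec3 \<Rightarrow> ('k vec3 set \<Rightarrow> 'k) \<Rightarrow> ('k vec3 set \<Rightarrow> 'k) \<Rightarrow> bool" where
  "secant_chart q a \<tau> \<sigma> \<longleftrightarrow> inj_on \<tau> (conic_pts q - pline a) \<and> (\<forall>P \<in> conic_pts q - pline a. \<tau> P \<noteq> 0) \<and>
    (\<forall>P \<in> conic_pts q - pline a. \<forall>Q \<in> conic_pts q - pline a. \<forall>R \<in> pline a.
       P \<noteq> Q \<longrightarrow> (pcollinear P Q R \<longleftrightarrow> \<tau> P * \<tau> Q = \<sigma> R))"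

definition tangent_chart ::
  "'k::field qform \<Rightarrow> 'k vec3 \<Rightarrow> ('k vec3 set \<Rightarrow> 'k) \<Rightarrow> ('k vec3 set \<Rightarrow> 'k) \<Rightarrow> bool" where
  "tangent_chart q a \<tau> \<sigma> \<longleftrightarrow> inj_on \<tau> (conic_pts q - pline a) \<and>
    (\<forall>P \<in> conic_pts q - pline a. \<forall>Q \<in> conic_pts q - pline a. \<forall>R \<in> pline a.
       P \<noteq> Q \<longrightarrow> pcollinear P Q R \<longrightarrow> \<tau> P + \<tau> Q = \<sigma> R)"

lemma proj_rep_conic_pts:
  assumes "P \<in> conic_pts q"
  shows "proj_rep P \<noteq> (0, 0, 0)" "P = proj_point (proj_rep P)" "qeval q (proj_rep P) = 0"
proof -
  show rep: "proj_rep P \<noteq> (0, 0, 0)" "P = proj_point (proj_rep P)"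
    using proj_rep conic_pts_subset_PG2 assms by blast+
  show "qeval q (proj_rep P) = 0"
    using proj_point_in_conic_pts_iff[OF rep(1)] rep(2) assms by simp
qed

lemma proj_rep_pline:
  assumes "R \<in> pline a"
  shows "proj_rep R \<noteq> (0, 0, 0)" "R = proj_point (proj_rep R)" "dot3 a (proj_rep R) = 0"
proof -
  show rep: "proj_rep R \<noteq> (0, 0, 0)" "R = proj_point (proj_rep R)"
    using proj_rep pline_subset_PG2 assms by blast+
  show "dot3 a (proj_rep R) = 0"
    using proj_point_in_pline_iff[OF rep(1)] rep(2) assms by simp
qed

lemma proj_rep_conic_pts_diff_pline:
  assumes "P \<in> conic_pts q - pline a"
  shows "dot3 a (proj_rep P) \<noteq> 0"
proof -
  have "P \<in> PG2" using assms conic_pts_subset_PG2 by blast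
  then have rep: "proj_rep P \<noteq> (0, 0, 0)" "P = proj_point (proj_rep P)" using proj_rep by blast+
  show ?thesis
  proof
    assume "dot3 a (proj_rep P) = 0"
    then have "proj_point (proj_rep P) \<in> pline a" using proj_point_in_pline_iff[OF rep(1)] by simp
    with rep(2) assms show False by simp
  qed
qed

context conic_frame
begin

abbreviation "point_param P \<equiv> param (proj_rep P)"

lemma inj_on_point_param:
  assumes "\<And>P. P \<in> conic_pts q - pline a \<Longrightarrow> B (proj_rep P) \<noteq> 0"
  shows "inj_on point_param (conic_pts q - pline a)"
proof (rule inj_onI)
  fix P Q assume P: "P \<in> conic_pts q - pline a" and Q: "Q \<in> conic_pts q - pline a"
    and "point_param P = point_param Q"
  moreover note u = proj_rep_conic_pts[of P q] and v = proj_rep_conic_pts[of Q q]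
  ultimately have "proj_point (proj_rep P) = proj_point (proj_rep Q)"
    using param_eq_iff[of "proj_rep P" "proj_rep Q"] assms by blast
  then show "P = Q" using u(2) v(2) P Q by simp
qed

lemma chord_equation_at:
  assumes P: "P \<in> conic_pts q" and Q: "Q \<in> conic_pts q" and R: "R \<in> pline a" and "P \<noteq> Q"
    and "B (proj_rep P) \<noteq> 0" "B (proj_rep Q) \<noteq> 0"
  shows "pcollinear P Q R \<longleftrightarrow> A (proj_rep R) + point_param P * point_param Q * B (proj_rep R)
    - \<rho> * (point_param P + point_param Q) * G (proj_rep R) = 0"
proof -
  note u = proj_rep_conic_pts[OF P] and v = proj_rep_conic_pts[OF Q] and w = proj_rep_pline[OF R]
  have "proj_point (proj_rep P) \<noteq> proj_point (proj_rep Q)" using \<open>P \<noteq> Q\<close> u(2) v(2) by simp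
  from pcollinear_iff_chord_equation[OF u(1) v(1) u(3) v(3) assms(5,6) this w(1)]
  show ?thesis using u(2) v(2) w(2) by simp
qed

lemma frame_coords_A_nonzero:
  assumes "R \<in> pline a" "B (proj_rep R) = 0" "G (proj_rep R) = 0"
  shows "A (proj_rep R) \<noteq> 0"
  using frame_coords_nonzero[OF det_nonzero proj_rep_pline(1)[OF assms(1)]] assms(2,3)
  by (simp add: frame_coords_def)

lemma secant_chart:
  assumes line: "cross3 e f = smul3 c a" "c \<noteq> 0"
  shows "secant_chart q a point_param (\<lambda>R. - A (proj_rep R) / B (proj_rep R))"
proof -
  have G_line: "G x = c * dot3 a x" for x using line by (simp add: dot3_smul_left)
  have B_nonzero: "B (proj_rep P) \<noteq> 0" and param_nonzero: "point_param P \<noteq> 0"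
    if "P \<in> conic_pts q - pline a" for P
  proof -
    let ?u = "proj_rep P"
    have "qeval q ?u = 0" using proj_rep_conic_pts(3)[of P q] that by simp
    have "dot3 a ?u \<noteq> 0" using that by (rule proj_rep_conic_pts_diff_pline)
    then have "G ?u \<noteq> 0" using G_line line(2) by simp
    show "B ?u \<noteq> 0"
    proof
      assume "B ?u = 0"
      then have "\<rho>\<^sup>2 * (G ?u)\<^sup>2 = 0" using conic_equation[OF \<open>qeval q ?u = 0\<close>] by simp
      then show False using rho_nonzero \<open>G ?u \<noteq> 0\<close> by simp
    qed
    with \<open>G ?u \<noteq> 0\<close> show "point_param P \<noteq> 0" using rho_nonzero by (simp add: param_def)
  qed
  have "pcollinear P Q R \<longleftrightarrow> point_param P * point_param Q = - A (proj_rep R) / B (proj_rep R)"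
    if P: "P \<in> conic_pts q - pline a" and Q: "Q \<in> conic_pts q - pline a" and R: "R \<in> pline a"
      and "P \<noteq> Q" for P Q R
  proof -
    let ?w = "proj_rep R"
    have "G ?w = 0" using G_line proj_rep_pline[OF R] by simp
    then have "pcollinear P Q R \<longleftrightarrow> A ?w + point_param P * point_param Q * B ?w = 0"
      using chord_equation_at[OF _ _ R \<open>P \<noteq> Q\<close> B_nonzero[OF P] B_nonzero[OF Q]] P Q by simp
    also have "\<dots> \<longleftrightarrow> point_param P * point_param Q = - A ?w / B ?w"
    proof (cases "B ?w = 0")
      case True
      then show ?thesis
        using frame_coords_A_nonzero[OF R] \<open>G ?w = 0\<close> param_nonzero[OF P] param_nonzero[OF Q] by simp
    next
      case False
      have "point_param P * point_param Q = - A ?w / B ?w \<longleftrightarrow>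
          point_param P * point_param Q * B ?w = - A ?w"
        using False by (simp add: field_simps)
      then show ?thesis by (metis add.commute eq_neg_iff_add_eq_0)
    qed
    finally show ?thesis .
  qed
  with inj_on_point_param[OF B_nonzero] param_nonzero show ?thesis
    unfolding secant_chart_def by simp
qed

lemma tangent_chart:
  assumes line: "cross3 g e = smul3 c a" "c \<noteq> 0"
  shows "tangent_chart q a point_param (\<lambda>R. A (proj_rep R) / (\<rho> * G (proj_rep R)))"
proof -
  have B_line: "B x = c * dot3 a x" for x using line by (simp add: dot3_smul_left)
  have B_nonzero: "B (proj_rep P) \<noteq> 0" if "P \<in> conic_pts q - pline a" for P
  proof -
    have "dot3 a (proj_rep P) \<noteq> 0" using that by (rule proj_rep_conic_pts_diff_pline)
    then show ?thesis using B_line line(2) by simp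
  qed
  have "point_param P + point_param Q = A (proj_rep R) / (\<rho> * G (proj_rep R))"
    if P: "P \<in> conic_pts q - pline a" and Q: "Q \<in> conic_pts q - pline a" and R: "R \<in> pline a"
      and "P \<noteq> Q" and coll: "pcollinear P Q R" for P Q R
  proof -
    let ?w = "proj_rep R"
    have "B ?w = 0" using B_line proj_rep_pline[OF R] by simp
    then have chord: "A ?w = \<rho> * (point_param P + point_param Q) * G ?w"
      using chord_equation_at[OF _ _ R \<open>P \<noteq> Q\<close> B_nonzero[OF P] B_nonzero[OF Q]] P Q coll by simp
    then have "G ?w \<noteq> 0" using frame_coords_A_nonzero[OF R \<open>B ?w = 0\<close>] by auto
    with chord show ?thesis using rho_nonzero by (simp add: field_simps)
  qed
  with inj_on_point_param[OF B_nonzero] show ?thesis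
    unfolding tangent_chart_def by simp
qed

end

lemma secant_or_tangent_chart:
  fixes q :: "'k::alg_closed_field qform"
  assumes irr: "irreducible_qform q" and a: "a \<noteq> (0, 0, 0)" and two: "(2::'k) \<noteq> 0"
  shows "(\<exists>\<tau> \<sigma>. secant_chart q a \<tau> \<sigma>) \<or> (\<exists>\<tau> \<sigma>. tangent_chart q a \<tau> \<sigma>)"
proof -
  obtain e f g c where frame: "polar_frame q e f g" and "c \<noteq> 0"
    and line: "cross3 e f = smul3 c a \<or> cross3 g e = smul3 c a"
    using exists_polar_frame[OF irr a two] by blast
  have "qpolar q e f \<noteq> 0" using frame by (simp add: polar_frame_def)
  obtain \<rho> where "\<rho>\<^sup>2 = - qeval q g / qpolar q e f" using exists_square_root by blast
  then have "\<rho>\<^sup>2 * qpolar q e f = - qeval q g" using \<open>qpolar q e f \<noteq> 0\<close> by simp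
  then interpret conic_frame q e f g \<rho>
    using frame two by unfold_locales
  show ?thesis using line secant_chart[OF _ \<open>c \<noteq> 0\<close>] tangent_chart[OF _ \<open>c \<noteq> 0\<close>] by blast
qed

lemma neg_mod_add_mod_eq_iff:
  fixes a b c n :: nat
  assumes "a < n" "b < n" "c < n"
  shows "((n - a) mod n + c) mod n = b \<longleftrightarrow> (a + b) mod n = c"
  using assms by (cases "a = 0"; cases "a \<le> c"; cases "a + b < n") (auto simp: mod_if)

lemma bij_betw_neg_mod: "bij_betw (\<lambda>i. (n - i) mod n) {0..<n::nat} {0..<n}"
proof -
  have involution: "(n - (n - i) mod n) mod n = i" if "i < n" for i
  proof (cases "i = 0")
    case False
    then have "(n - i) mod n = n - i" using that by simp
    then show ?thesis using that by simp
  qed simp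
  show ?thesis by (rule bij_betwI[where g = "\<lambda>i. (n - i) mod n"]) (auto simp: involution)
qed

lemma realizes_cyclic_swap12:
  assumes "realizes L1 L2 L3 (cyclic_carrier n) (cyclic_mult n)"
  shows "realizes L2 L1 L3 (cyclic_carrier n) (cyclic_mult n)"
proof -
  obtain \<alpha> \<beta> \<gamma> where bij: "bij_betw \<alpha> (cyclic_carrier n) L1" "bij_betw \<beta> (cyclic_carrier n) L2"
      "bij_betw \<gamma> (cyclic_carrier n) L3"
    and coll: "\<And>a b c. a \<in> cyclic_carrier n \<Longrightarrow> b \<in> cyclic_carrier n \<Longrightarrow> c \<in> cyclic_carrier n \<Longrightarrow>
      cyclic_mult n a b = c \<longleftrightarrow> pcollinear (\<alpha> a) (\<beta> b) (\<gamma> c)"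
    using assms unfolding realizes_def by blast
  have "cyclic_mult n a b = c \<longleftrightarrow> pcollinear (\<beta> a) (\<alpha> b) (\<gamma> c)"
    if "a \<in> cyclic_carrier n" "b \<in> cyclic_carrier n" "c \<in> cyclic_carrier n" for a b c
    using coll[OF that(2,1,3)] pcollinear_swap12 by (simp add: cyclic_mult_def add.commute)
  then show ?thesis unfolding realizes_def using bij by blast
qed

lemma realizes_cyclic_swap23:
  assumes "realizes L1 L2 L3 (cyclic_carrier n) (cyclic_mult n)"
  shows "realizes L1 L3 L2 (cyclic_carrier n) (cyclic_mult n)"
proof -
  obtain \<alpha> \<beta> \<gamma> where bij: "bij_betw \<alpha> (cyclic_carrier n) L1" "bij_betw \<beta> (cyclic_carrier n) L2"
      "bij_betw \<gamma> (cyclic_carrier n) L3"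
    and coll: "\<And>a b c. a \<in> cyclic_carrier n \<Longrightarrow> b \<in> cyclic_carrier n \<Longrightarrow> c \<in> cyclic_carrier n \<Longrightarrow>
      cyclic_mult n a b = c \<longleftrightarrow> pcollinear (\<alpha> a) (\<beta> b) (\<gamma> c)"
    using assms unfolding realizes_def by blast
  let ?neg = "\<lambda>i. (n - i) mod n"
  have "bij_betw (\<alpha> \<circ> ?neg) (cyclic_carrier n) L1"
    using bij_betw_trans[OF bij_betw_neg_mod] bij(1) unfolding cyclic_carrier_def by blast
  moreover have "cyclic_mult n a b = c \<longleftrightarrow> pcollinear ((\<alpha> \<circ> ?neg) a) (\<gamma> b) (\<beta> c)"
    if "a \<in> cyclic_carrier n" "b \<in> cyclic_carrier n" "c \<in> cyclic_carrier n" for a b c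
  proof -
    have "?neg a \<in> cyclic_carrier n" using that(1) by (simp add: cyclic_carrier_def)
    from coll[OF this that(3,2)] show ?thesis
      using that neg_mod_add_mod_eq_iff[of a n b c] pcollinear_swap23[of "\<alpha> (?neg a)" "\<gamma> b" "\<beta> c"]
      by (simp add: cyclic_carrier_def cyclic_mult_def)
  qed
  ultimately show ?thesis unfolding realizes_def using bij(2,3) by blast
qed

lemma realizes_cyclic_if_product_coordinates:
  fixes S :: "'k::field set"
  assumes S: "finite S" "1 \<in> S" "0 \<notin> S" "\<And>x y. x \<in> S \<Longrightarrow> y \<in> S \<Longrightarrow> x * y \<in> S" "card S = n"
    and bij: "bij_betw fY Y S" "bij_betw fZ Z S" "bij_betw fX X S"
    and coll: "\<And>y z x. y \<in> Y \<Longrightarrow> z \<in> Z \<Longrightarrow> x \<in> X \<Longrightarrow> pcollinear y z x \<longleftrightarrow> fY y * fZ z = fX x"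
  shows "realizes Y Z X (cyclic_carrier n) (cyclic_mult n)"
proof -
  obtain g where g: "bij_betw (\<lambda>i. g ^ i) {0..<n} S" "g ^ n = 1"
    using finite_mult_subgroup_cyclic[OF S(1-4)] S(5) by metis
  have pow_mod: "g ^ i = g ^ (i mod n)" for i
  proof -
    have "g ^ i = (g ^ n) ^ (i div n) * g ^ (i mod n)"
      by (simp flip: power_mult power_add)
    then show ?thesis using g(2) by simp
  qed
  have pow_eq_iff: "g ^ i = g ^ c \<longleftrightarrow> i mod n = c" if "c < n" for i c
  proof -
    have "0 < n" using that by simp
    then have "g ^ i = g ^ c \<longleftrightarrow> g ^ (i mod n) = g ^ c" using pow_mod by metis
    also have "\<dots> \<longleftrightarrow> i mod n = c"
      using g(1) that \<open>0 < n\<close> unfolding bij_betw_def inj_on_def by auto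
    finally show ?thesis .
  qed
  define \<alpha> where "\<alpha> = inv_into Y fY \<circ> (\<lambda>i. g ^ i)"
  define \<beta> where "\<beta> = inv_into Z fZ \<circ> (\<lambda>i. g ^ i)"
  define \<gamma> where "\<gamma> = inv_into X fX \<circ> (\<lambda>i. g ^ i)"
  have bij': "bij_betw \<alpha> {0..<n} Y" "bij_betw \<beta> {0..<n} Z" "bij_betw \<gamma> {0..<n} X"
    unfolding \<alpha>_def \<beta>_def \<gamma>_def using bij g(1) by (auto intro: bij_betw_trans bij_betw_inv_into)
  have coords: "fY (\<alpha> i) = g ^ i" "fZ (\<beta> i) = g ^ i" "fX (\<gamma> i) = g ^ i" if "i < n" for i
  proof -
    have "g ^ i \<in> S" using g(1) that by (auto simp: bij_betw_def)
    then show "fY (\<alpha> i) = g ^ i" "fZ (\<beta> i) = g ^ i" "fX (\<gamma> i) = g ^ i"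
      using bij unfolding \<alpha>_def \<beta>_def \<gamma>_def bij_betw_def by (simp_all add: f_inv_into_f)
  qed
  have "cyclic_mult n a b = c \<longleftrightarrow> pcollinear (\<alpha> a) (\<beta> b) (\<gamma> c)" if "a < n" "b < n" "c < n" for a b c
  proof -
    have "pcollinear (\<alpha> a) (\<beta> b) (\<gamma> c) \<longleftrightarrow> g ^ a * g ^ b = g ^ c"
      using coll[of "\<alpha> a" "\<beta> b" "\<gamma> c"] bij' that coords by (auto simp: bij_betw_def)
    also have "\<dots> \<longleftrightarrow> (a + b) mod n = c" using pow_eq_iff[OF that(3), of "a + b"] by (simp add: power_add)
    finally show ?thesis by (simp add: cyclic_mult_def)
  qed
  then show ?thesis unfolding realizes_def cyclic_carrier_def using bij' by auto
qed

lemma dual_3net_components: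
  assumes "dual_3net L1 L2 L3 n" "i < 3"
  shows "comp3 L1 L2 L3 i \<subseteq> PG2" "finite (comp3 L1 L2 L3 i)" "card (comp3 L1 L2 L3 i) = n"
  using assms(1)[unfolded dual_3net_def, THEN conjunct1, rule_format, OF assms(2)] by simp_all

lemma dual_3net_disjoint:
  assumes "dual_3net L1 L2 L3 n" "i < 3" "j < 3" "i \<noteq> j"
  shows "comp3 L1 L2 L3 i \<inter> comp3 L1 L2 L3 j = {}"
  using assms(1)[unfolded dual_3net_def, THEN conjunct2, THEN conjunct1, rule_format, OF assms(2-4)] .

lemma dual_3net_card_line_inter:
  assumes "dual_3net L1 L2 L3 n" "l \<in> plines" "i < 3" "j < 3" "i \<noteq> j"
    "l \<inter> comp3 L1 L2 L3 i \<noteq> {}" "l \<inter> comp3 L1 L2 L3 j \<noteq> {}" "k < 3"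
  shows "card (l \<inter> comp3 L1 L2 L3 k) = 1"
  using assms(1)[unfolded dual_3net_def, THEN conjunct2, THEN conjunct2, rule_format,
    OF assms(2-4) conjI[OF assms(5) conjI[OF assms(6,7)]] assms(8)] .

lemma dual_3net_reindex:
  assumes net: "dual_3net L1 L2 L3 n" and \<pi>: "\<And>i. i < 3 \<Longrightarrow> \<pi> i < 3" "inj_on \<pi> {..<3}"
    and comp: "\<And>i. i < 3 \<Longrightarrow> comp3 M1 M2 M3 i = comp3 L1 L2 L3 (\<pi> i)"
  shows "dual_3net M1 M2 M3 n"
proof -
  have neq: "\<pi> i \<noteq> \<pi> j" if "i < 3" "j < 3" "i \<noteq> j" for i j
    using \<pi>(2) that unfolding inj_on_def by blast
  have "\<forall>i<3. comp3 M1 M2 M3 i \<subseteq> PG2 \<and> finite (comp3 M1 M2 M3 i) \<and> card (comp3 M1 M2 M3 i) = n"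
    using dual_3net_components[OF net \<pi>(1)] comp by simp
  moreover have "\<forall>i<3. \<forall>j<3. i \<noteq> j \<longrightarrow> comp3 M1 M2 M3 i \<inter> comp3 M1 M2 M3 j = {}"
    using dual_3net_disjoint[OF net \<pi>(1) \<pi>(1) neq] comp by simp
  moreover have "\<forall>l\<in>plines. \<forall>i<3. \<forall>j<3. i \<noteq> j \<and> l \<inter> comp3 M1 M2 M3 i \<noteq> {} \<and>
      l \<inter> comp3 M1 M2 M3 j \<noteq> {} \<longrightarrow> (\<forall>k<3. card (l \<inter> comp3 M1 M2 M3 k) = 1)"
  proof (intro ballI allI impI)
    fix l and i j k :: nat assume "l \<in> plines" "i < 3" "j < 3" "k < 3"
      and meets: "i \<noteq> j \<and> l \<inter> comp3 M1 M2 M3 i \<noteq> {} \<and> l \<inter> comp3 M1 M2 M3 j \<noteq> {}"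
    then show "card (l \<inter> comp3 M1 M2 M3 k) = 1"
      using dual_3net_card_line_inter[OF net \<open>l \<in> plines\<close> \<pi>(1)[of i] \<pi>(1)[of j] neq[of i j] _ _ \<pi>(1)[of k]]
        comp by simp
  qed
  ultimately show ?thesis unfolding dual_3net_def by blast
qed

lemma dual_3net_swap12: "dual_3net L1 L2 L3 n \<Longrightarrow> dual_3net L2 L1 L3 n"
  by (rule dual_3net_reindex[where \<pi> = "\<lambda>i. if i = 0 then 1 else if i = 1 then 0 else i"])
    (auto simp: inj_on_def comp3_def)

lemma dual_3net_swap23: "dual_3net L1 L2 L3 n \<Longrightarrow> dual_3net L1 L3 L2 n"
  by (rule dual_3net_reindex[where \<pi> = "\<lambda>i. if i = 1 then 2 else if i = 2 then 1 else i"])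
    (auto simp: inj_on_def comp3_def)

locale conic_line_net =
  fixes Y Z X :: "'k::field vec3 set set" and n :: nat and q :: "'k qform" and a :: "'k vec3"
  assumes net: "dual_3net Y Z X n" and two_le_n: "2 \<le> n" and a: "a \<noteq> (0, 0, 0)"
    and X_line: "X \<subseteq> pline a" and Y_conic: "Y \<subseteq> conic_pts q" and Z_conic: "Z \<subseteq> conic_pts q"
begin

lemma components:
  "Y \<subseteq> PG2" "finite Y" "card Y = n" "Z \<subseteq> PG2" "finite Z" "card Z = n"
  "X \<subseteq> PG2" "finite X" "card X = n" "Y \<inter> Z = {}"
  using dual_3net_components[OF net, of 0] dual_3net_components[OF net, of 1]
    dual_3net_components[OF net, of 2] dual_3net_disjoint[OF net, of 0 1]
  by (simp_all add: comp3_def)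

lemma card_line_inter_X:
  assumes "l \<in> plines" "l \<inter> Y \<noteq> {}" "l \<inter> Z \<noteq> {}"
  shows "card (l \<inter> X) = 1"
  using dual_3net_card_line_inter[OF net assms(1), of 0 1 2] assms(2,3) by (simp add: comp3_def)

lemma card_line_inter_X':
  assumes "l \<in> plines" "l \<inter> Y \<noteq> {} \<or> l \<inter> Z \<noteq> {}" "l \<inter> X \<noteq> {}"
  shows "card (l \<inter> X) = 1"
  using dual_3net_card_line_inter[OF net assms(1), of 0 2 2] dual_3net_card_line_inter[OF net assms(1), of 1 2 2]
    assms(2,3) by (auto simp: comp3_def)

lemma card_line_inter_Z:
  assumes "l \<in> plines" "l \<inter> Y \<noteq> {}" "l \<inter> X \<noteq> {}"
  shows "card (l \<inter> Z) = 1"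
  using dual_3net_card_line_inter[OF net assms(1), of 0 2 1] assms(2,3) by (simp add: comp3_def)

lemma conic_components_off_line: "Y \<subseteq> conic_pts q - pline a" "Z \<subseteq> conic_pts q - pline a"
proof -
  have "pline a \<in> plines" using a unfolding plines_def by blast
  have "pline a \<inter> X = X" "X \<noteq> {}" using X_line components(9) two_le_n by auto
  then have "card (pline a \<inter> X) \<noteq> 1" using components(9) two_le_n by simp
  then have "pline a \<inter> Y = {}" "pline a \<inter> Z = {}"
    using card_line_inter_X'[OF \<open>pline a \<in> plines\<close>] \<open>pline a \<inter> X = X\<close> \<open>X \<noteq> {}\<close> by metis+
  then show "Y \<subseteq> conic_pts q - pline a" "Z \<subseteq> conic_pts q - pline a"
    using Y_conic Z_conic by blast+
qed

lemma exists_collinear_in_X: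
  assumes "y \<in> Y" "z \<in> Z"
  shows "\<exists>x\<in>X. pcollinear y z x"
proof -
  have "y \<noteq> z" using assms components(10) by auto
  then obtain l where l: "l \<in> plines" "y \<in> l" "z \<in> l"
    using line_through_points assms components(1,4) by blast
  then have "card (l \<inter> X) = 1" using card_line_inter_X assms by blast
  then obtain x where "x \<in> l \<inter> X" by (metis card_1_singletonE insertI1)
  then show ?thesis using l unfolding pcollinear_def by blast
qed

lemma collinear_in_X_unique:
  assumes "y \<in> Y" "z \<in> Z" "x \<in> X" "x' \<in> X" "pcollinear y z x" "pcollinear y z x'"
  shows "x = x'"
proof -
  obtain l l' where l: "l \<in> plines" "y \<in> l" "z \<in> l" "x \<in> l"
    and l': "l' \<in> plines" "y \<in> l'" "z \<in> l'" "x' \<in> l'"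
    using assms(5,6) unfolding pcollinear_def by blast
  have "y \<noteq> z" using assms components(10) by auto
  then have "l' = l" using plines_eq_if_two_common_points l l' by metis
  moreover have "card (l \<inter> X) = 1" using card_line_inter_X l assms(1,2) by blast
  ultimately show ?thesis using l(4) l'(4) assms(3,4) by (metis IntI card_1_singletonE singletonD)
qed

lemma exists_collinear_in_YZ:
  assumes "x \<in> X"
  shows "\<exists>y\<in>Y. \<exists>z\<in>Z. pcollinear y z x"
proof -
  obtain y where "y \<in> Y" using components(3) two_le_n by fastforce
  moreover have "y \<notin> pline a" using conic_components_off_line(1) \<open>y \<in> Y\<close> by blast
  then have "y \<noteq> x" using assms X_line by blast
  ultimately obtain l where l: "l \<in> plines" "y \<in> l" "x \<in> l"
    using line_through_points assms components(1,7) by blast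
  then have "card (l \<inter> Z) = 1" using card_line_inter_Z assms \<open>y \<in> Y\<close> by blast
  then obtain z where "z \<in> l \<inter> Z" by (metis card_1_singletonE insertI1)
  then show ?thesis using l \<open>y \<in> Y\<close> unfolding pcollinear_def by blast
qed

lemma no_tangent_chart:
  assumes char: "\<And>j. 0 < j \<Longrightarrow> j \<le> n \<Longrightarrow> of_nat j \<noteq> (0::'k)"
  shows "\<not> tangent_chart q a \<tau> \<sigma>"
proof
  assume "tangent_chart q a \<tau> \<sigma>"
  then have chart_inj: "inj_on \<tau> (conic_pts q - pline a)"
    and chart_sum: "\<And>P Q R. P \<in> conic_pts q - pline a \<Longrightarrow> Q \<in> conic_pts q - pline a \<Longrightarrow>
      R \<in> pline a \<Longrightarrow> P \<noteq> Q \<Longrightarrow> pcollinear P Q R \<Longrightarrow> \<tau> P + \<tau> Q = \<sigma> R"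
    unfolding tangent_chart_def by blast+
  have inj: "inj_on \<tau> Y" "inj_on \<tau> Z"
    using inj_on_subset[OF chart_inj] conic_components_off_line by blast+
  have sum: "\<tau> y + \<tau> z \<in> \<sigma> ` X" if yz: "y \<in> Y" "z \<in> Z" for y z
  proof -
    obtain x where "x \<in> X" "pcollinear y z x" using exists_collinear_in_X yz by blast
    moreover have "y \<noteq> z" using yz components(10) by auto
    ultimately have "\<tau> y + \<tau> z = \<sigma> x"
      using chart_sum conic_components_off_line X_line yz by blast
    with \<open>x \<in> X\<close> show ?thesis by simp
  qed
  have cards: "card (\<tau> ` Y) = n" "card (\<tau> ` Z) = n" "card (\<sigma> ` X) \<le> n"
    using inj components card_image_le[OF components(8), of \<sigma>] by (simp_all add: card_image)
  have "s + t \<in> \<sigma> ` X" if "s \<in> \<tau> ` Y" "t \<in> \<tau> ` Z" for s t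
    using that sum by auto
  from sum_set_not_in_smaller_set[OF finite_imageI[OF components(8)] cards two_le_n this char]
  show False .
qed

lemma realizes_if_secant_chart:
  assumes chart: "secant_chart q a \<tau> \<sigma>"
  shows "realizes Y Z X (cyclic_carrier n) (cyclic_mult n)"
proof -
  have chart_inj: "inj_on \<tau> (conic_pts q - pline a)"
    and chart_nonzero: "\<And>P. P \<in> conic_pts q - pline a \<Longrightarrow> \<tau> P \<noteq> 0"
    and chart_coll: "\<And>P Q R. P \<in> conic_pts q - pline a \<Longrightarrow> Q \<in> conic_pts q - pline a \<Longrightarrow>
      R \<in> pline a \<Longrightarrow> P \<noteq> Q \<Longrightarrow> pcollinear P Q R \<longleftrightarrow> \<tau> P * \<tau> Q = \<sigma> R"
    using chart unfolding secant_chart_def by blast+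
  have inj: "inj_on \<tau> Y" "inj_on \<tau> Z"
    using inj_on_subset[OF chart_inj] conic_components_off_line by blast+
  have nonzero: "0 \<notin> \<tau> ` Y" "0 \<notin> \<tau> ` Z"
    using chart_nonzero conic_components_off_line by (metis image_iff subsetD)+
  have coll: "pcollinear y z x \<longleftrightarrow> \<tau> y * \<tau> z = \<sigma> x" if "y \<in> Y" "z \<in> Z" "x \<in> X" for y z x
  proof -
    have "y \<noteq> z" using that components(10) by auto
    then show ?thesis using chart_coll conic_components_off_line X_line that by blast
  qed
  have "inj_on \<sigma> X"
  proof (rule inj_onI)
    fix x x' assume "x \<in> X" "x' \<in> X" "\<sigma> x = \<sigma> x'"
    moreover obtain y z where "y \<in> Y" "z \<in> Z" "pcollinear y z x"
      using exists_collinear_in_YZ \<open>x \<in> X\<close> by blast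
    ultimately show "x = x'" using coll collinear_in_X_unique by metis
  qed
  have prod: "\<tau> y * \<tau> z \<in> \<sigma> ` X" if yz: "y \<in> Y" "z \<in> Z" for y z
  proof -
    obtain x where "x \<in> X" "pcollinear y z x" using exists_collinear_in_X yz by blast
    then show ?thesis using coll yz by simp
  qed
  have sizes: "finite (\<tau> ` Z)" "finite (\<sigma> ` X)" "card (\<tau> ` Y) = n" "card (\<tau> ` Z) = n"
    "card (\<sigma> ` X) = n" "0 < n"
    using inj \<open>inj_on \<sigma> X\<close> components two_le_n by (simp_all add: card_image)
  have "s * t \<in> \<sigma> ` X" if "s \<in> \<tau> ` Y" "t \<in> \<tau> ` Z" for s t
    using that prod by auto
  from product_sets_are_cosets[OF sizes nonzero this]
  obtain S y0 z0 where S: "finite S" "1 \<in> S" "0 \<notin> S"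
      "\<And>x y. x \<in> S \<Longrightarrow> y \<in> S \<Longrightarrow> x * y \<in> S" "card S = n"
    and cosets: "y0 \<noteq> 0" "z0 \<noteq> 0" "\<tau> ` Y = (\<lambda>s. y0 * s) ` S" "\<tau> ` Z = (\<lambda>s. z0 * s) ` S"
      "\<sigma> ` X = (\<lambda>s. y0 * z0 * s) ` S"
    by blast
  have bij_scaled: "bij_betw (\<lambda>y. f y / c) A S"
    if "inj_on f A" "f ` A = (\<lambda>s. c * s) ` S" "c \<noteq> 0" for f :: "'k vec3 set \<Rightarrow> 'k" and A c
  proof (rule bij_betw_imageI)
    show "inj_on (\<lambda>y. f y / c) A" using that(1,3) by (simp add: inj_on_def)
    have "(\<lambda>y. f y / c) ` A = (\<lambda>s. s / c) ` (f ` A)" by (simp add: image_image)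
    then show "(\<lambda>y. f y / c) ` A = S" using that(2,3) by (simp add: image_image)
  qed
  show ?thesis
  proof (rule realizes_cyclic_if_product_coordinates[OF S])
    show "bij_betw (\<lambda>y. \<tau> y / y0) Y S" "bij_betw (\<lambda>z. \<tau> z / z0) Z S"
      "bij_betw (\<lambda>x. \<sigma> x / (y0 * z0)) X S"
      using bij_scaled inj \<open>inj_on \<sigma> X\<close> cosets by simp_all
    show "pcollinear y z x \<longleftrightarrow> \<tau> y / y0 * (\<tau> z / z0) = \<sigma> x / (y0 * z0)"
      if "y \<in> Y" "z \<in> Z" "x \<in> X" for y z x
      using coll[OF that] cosets(1,2) by (simp add: field_simps)
  qed
qed

end

lemma conic_line_net_realizes_cyclic:
  fixes q :: "'k::alg_closed_field qform"
  assumes "conic_line_net Y Z X n q a" and irr: "irreducible_qform q" and two: "(2::'k) \<noteq> 0"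
    and char: "\<And>j. 0 < j \<Longrightarrow> j \<le> n \<Longrightarrow> of_nat j \<noteq> (0::'k)"
  shows "realizes Y Z X (cyclic_carrier n) (cyclic_mult n)"
proof -
  interpret conic_line_net Y Z X n q a by fact
  from secant_or_tangent_chart[OF irr a two] show ?thesis
  proof (elim disjE exE)
    fix \<tau> \<sigma> assume "secant_chart q a \<tau> \<sigma>"
    then show ?thesis by (rule realizes_if_secant_chart)
  next
    fix \<tau> \<sigma> assume "tangent_chart q a \<tau> \<sigma>"
    with no_tangent_chart[OF char] show ?thesis by contradiction
  qed
qed

lemma of_nat_nonzero_below_char:
  assumes "0 < j" "CHAR('k) = 0 \<or> j < CHAR('k)"
  shows "of_nat j \<noteq> (0::'k::semiring_1)"
  using assms by (auto simp: of_nat_eq_0_iff_char_dvd dest: dvd_imp_le)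

theorem proposition4p11:
  fixes L1 L2 L3 :: "'k::alg_closed_field vec3 set set" and n :: nat
  assumes "CHAR('k) = 0 \<or> CHAR('k) \<ge> 5"
    and "conic_line_type L1 L2 L3 n"
    and "CHAR('k) > 0 \<longrightarrow> n < CHAR('k)"
  shows "realizes L1 L2 L3 (cyclic_carrier n) (cyclic_mult n)"
proof -
  obtain k C l where "k < 3" "irreducible_conic C" "l \<in> plines" and line: "comp3 L1 L2 L3 k \<subseteq> l"
    and conic: "\<forall>i<3. i \<noteq> k \<longrightarrow> comp3 L1 L2 L3 i \<subseteq> C"
    and net: "dual_3net L1 L2 L3 n" and "4 \<le> n"
    using assms(2) unfolding conic_line_type_def by blast
  obtain q where irr: "irreducible_qform q" "C = conic_pts q"
    using \<open>irreducible_conic C\<close> unfolding irreducible_conic_def by blast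
  obtain a where "a \<noteq> (0, 0, 0)" "l = pline a" using \<open>l \<in> plines\<close> unfolding plines_def by blast
  have two: "(2::'k) \<noteq> 0" using of_nat_nonzero_below_char[of 2] assms(1) by auto
  have char: "of_nat j \<noteq> (0::'k)" if "0 < j" "j \<le> n" for j
    using of_nat_nonzero_below_char[of j] that assms(3) by auto
  have on_line: "comp3 L1 L2 L3 k \<subseteq> pline a" using line \<open>l = pline a\<close> by simp
  have on_conic: "comp3 L1 L2 L3 i \<subseteq> conic_pts q" if "i < 3" "i \<noteq> k" for i
    using conic irr(2) that by blast
  have "2 \<le> n" using \<open>4 \<le> n\<close> by simp
  have "k = 0 \<or> k = 1 \<or> k = 2" using \<open>k < 3\<close> by presburger
  then show ?thesis
  proof (elim disjE)
    assume "k = 0"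
    then have "L1 \<subseteq> pline a" "L2 \<subseteq> conic_pts q" "L3 \<subseteq> conic_pts q"
      using on_line on_conic[of 1] on_conic[of 2] by (simp_all add: comp3_def)
    with dual_3net_swap23[OF dual_3net_swap12[OF net]] have "conic_line_net L2 L3 L1 n q a"
      using \<open>2 \<le> n\<close> \<open>a \<noteq> _\<close> by (simp add: conic_line_net_def)
    from realizes_cyclic_swap23[OF conic_line_net_realizes_cyclic[OF this irr(1) two char]]
    show ?thesis by (rule realizes_cyclic_swap12)
  next
    assume "k = 1"
    then have "L2 \<subseteq> pline a" "L1 \<subseteq> conic_pts q" "L3 \<subseteq> conic_pts q"
      using on_line on_conic[of 0] on_conic[of 2] by (simp_all add: comp3_def)
    with dual_3net_swap23[OF net] have "conic_line_net L1 L3 L2 n q a"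
      using \<open>2 \<le> n\<close> \<open>a \<noteq> _\<close> by (simp add: conic_line_net_def)
    from conic_line_net_realizes_cyclic[OF this irr(1) two char]
    show ?thesis by (rule realizes_cyclic_swap23)
  next
    assume "k = 2"
    then have "L3 \<subseteq> pline a" "L1 \<subseteq> conic_pts q" "L2 \<subseteq> conic_pts q"
      using on_line on_conic[of 0] on_conic[of 1] by (simp_all add: comp3_def)
    with net have "conic_line_net L1 L2 L3 n q a"
      using \<open>2 \<le> n\<close> \<open>a \<noteq> _\<close> by (simp add: conic_line_net_def)
    from conic_line_net_realizes_cyclic[OF this irr(1) two char] show ?thesis .
  qed
qed
end
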